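(* Fix a positive integer $n$, let $x=(x_1,\dots,x_n)$, and let $\lambda$ be a partition with at most $n$ rows. Then $$s_\lambda(x\,\|\,a)=\sum_T\prod_{\substack{\alpha\in\lambda\\ T(\alpha)\text{ unprimed}}}x_{T(\alpha)}\prod_{\substack{\alpha\in\lambda\\ T(\alpha)\text{ primed}}}\big(-a_{T(\alpha)}\big),$$ summed over all reverse $\lambda$-supertableaux $T$ (for a primed entry $k'$, $a_{T(\alpha)}$ means $a_k$).
   Context: $a=(a_i)_{i\in\mathbb{Z}}$ are independent variables. Partitions are identified with Young diagrams; box $(i,j)$ has content $c(\alpha)=j-i$; $\lambda'_j$ is the length of column $j$. The double Schur polynomial is $s_\lambda(x\,\|\,a)=\sum_T\prod_{\alpha\in\lambda}(x_{T(\alpha)}-a_{T(\alpha)-c(\alpha)})$ summed over reverse $\lambda$-tableaux $T$ (entries in $\{1,\dots,n\}$, weakly decreasing along rows, strictly decreasing down columns). A reverse $\lambda$-supertableau is a filling of $\lambda$ with symbols from $\{1,\dots,n\}\cup\{k':k\in\mathbb{Z},\ k\le n\}$ such that: in each row (resp. column) every primed symbol lies to the right of (resp. below) every unprimed symbol; unprimed symbols weakly decrease along rows and strictly decrease down columns; primed symbols strictly decrease along rows and weakly decrease down columns (comparing $k'$ by $k$); and every primed symbol $k'$ in column $j$ satisfies $k\ge\lambda'_j-j+1$. *)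

theory Defs
  imports Main
begin

text \<open>A partition is a weakly decreasing list of positive naturals (its rows, top to bottom).
Boxes are pairs (i,j) with 1-based row i and column j.\<close>

definition is_partition :: "nat list \<Rightarrow> bool" where
  "is_partition lam \<longleftrightarrow> sorted_wrt (\<ge>) lam \<and> (\<forall>r\<in>set lam. 0 < r)"

definition diagram :: "nat list \<Rightarrow> (nat \<times> nat) set" where
  "diagram lam = {(i, j). 1 \<le> i \<and> i \<le> length lam \<and> 1 \<le> j \<and> j \<le> lam ! (i - 1)}"

definition content :: "nat \<times> nat \<Rightarrow> int" where
  "content \<alpha> = int (snd \<alpha>) - int (fst \<alpha>)"

definition col_len :: "nat list \<Rightarrow> nat \<Rightarrow> nat" where
  "col_len lam j = card {i. (i, j) \<in> diagram lam}"

definition reverse_tableau :: "nat \<Rightarrow> nat list \<Rightarrow> (nat \<times> nat \<Rightarrow> nat) \<Rightarrow> bool" where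
  "reverse_tableau n lam T \<longleftrightarrow>
     (\<forall>\<alpha>. \<alpha> \<notin> diagram lam \<longrightarrow> T \<alpha> = 0) \<and>
     (\<forall>\<alpha>\<in>diagram lam. 1 \<le> T \<alpha> \<and> T \<alpha> \<le> n) \<and>
     (\<forall>i j j'. (i, j) \<in> diagram lam \<longrightarrow> (i, j') \<in> diagram lam \<longrightarrow> j < j' \<longrightarrow> T (i, j') \<le> T (i, j)) \<and>
     (\<forall>i i' j. (i, j) \<in> diagram lam \<longrightarrow> (i', j) \<in> diagram lam \<longrightarrow> i < i' \<longrightarrow> T (i', j) < T (i, j))"

definition double_schur :: "nat \<Rightarrow> nat list \<Rightarrow> (nat \<Rightarrow> 'r::comm_ring_1) \<Rightarrow> (int \<Rightarrow> 'r) \<Rightarrow> 'r" where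
  "double_schur n lam x a =
     (\<Sum>T\<in>{T. reverse_tableau n lam T}.
        \<Prod>\<alpha>\<in>diagram lam. x (T \<alpha>) - a (int (T \<alpha>) - content \<alpha>))"

text \<open>Symbols for supertableaux: unprimed k (k in {1..n}) and primed k' (k integer, k \<le> n).\<close>

datatype sym = Unpr nat | Pr int

definition reverse_supertableau :: "nat \<Rightarrow> nat list \<Rightarrow> (nat \<times> nat \<Rightarrow> sym) \<Rightarrow> bool" where
  "reverse_supertableau n lam T \<longleftrightarrow>
     (\<forall>\<alpha>. \<alpha> \<notin> diagram lam \<longrightarrow> T \<alpha> = Unpr 0) \<and>
     (\<forall>\<alpha>\<in>diagram lam. \<forall>k. T \<alpha> = Unpr k \<longrightarrow> 1 \<le> k \<and> k \<le> n) \<and>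
     (\<forall>\<alpha>\<in>diagram lam. \<forall>k. T \<alpha> = Pr k \<longrightarrow> k \<le> int n) \<and>
     \<comment> \<open>in each row, primed symbols lie to the right of unprimed ones\<close>
     (\<forall>i j j' k k'. (i, j) \<in> diagram lam \<longrightarrow> (i, j') \<in> diagram lam \<longrightarrow>
        T (i, j) = Pr k \<longrightarrow> T (i, j') = Unpr k' \<longrightarrow> j' < j) \<and>
     \<comment> \<open>in each column, primed symbols lie below unprimed ones\<close>
     (\<forall>i i' j k k'. (i, j) \<in> diagram lam \<longrightarrow> (i', j) \<in> diagram lam \<longrightarrow>
        T (i, j) = Pr k \<longrightarrow> T (i', j) = Unpr k' \<longrightarrow> i' < i) \<and>
     \<comment> \<open>unprimed: weakly decreasing along rows\<close>
     (\<forall>i j j' k k'. (i, j) \<in> diagram lam \<longrightarrow> (i, j') \<in> diagram lam \<longrightarrow> j < j' \<longrightarrow>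
        T (i, j) = Unpr k \<longrightarrow> T (i, j') = Unpr k' \<longrightarrow> k' \<le> k) \<and>
     \<comment> \<open>unprimed: strictly decreasing down columns\<close>
     (\<forall>i i' j k k'. (i, j) \<in> diagram lam \<longrightarrow> (i', j) \<in> diagram lam \<longrightarrow> i < i' \<longrightarrow>
        T (i, j) = Unpr k \<longrightarrow> T (i', j) = Unpr k' \<longrightarrow> k' < k) \<and>
     \<comment> \<open>primed: strictly decreasing along rows\<close>
     (\<forall>i j j' k k'. (i, j) \<in> diagram lam \<longrightarrow> (i, j') \<in> diagram lam \<longrightarrow> j < j' \<longrightarrow>
        T (i, j) = Pr k \<longrightarrow> T (i, j') = Pr k' \<longrightarrow> k' < k) \<and>
     \<comment> \<open>primed: weakly decreasing down columns\<close>
     (\<forall>i i' j k k'. (i, j) \<in> diagram lam \<longrightarrow> (i', j) \<in> diagram lam \<longrightarrow> i < i' \<longrightarrow>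
        T (i, j) = Pr k \<longrightarrow> T (i', j) = Pr k' \<longrightarrow> k' \<le> k) \<and>
     \<comment> \<open>primed k' in column j satisfies k \<ge> col_len j - j + 1\<close>
     (\<forall>i j k. (i, j) \<in> diagram lam \<longrightarrow> T (i, j) = Pr k \<longrightarrow>
        int (col_len lam j) - int j + 1 \<le> k)"

definition sym_weight :: "(nat \<Rightarrow> 'r::comm_ring_1) \<Rightarrow> (int \<Rightarrow> 'r) \<Rightarrow> sym \<Rightarrow> 'r" where
  "sym_weight x a s = (case s of Unpr k \<Rightarrow> x k | Pr k \<Rightarrow> - a k)"

end

theory Submission
  imports Defs
begin

(*
  Both sides of the identity are instances of one generating function.
  A word is a list of letters; a letter is either unprimed (it may repeat along a row
  but not down a column) or primed (it may repeat down a column but not along a row),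
  and it carries a weight depending on the content of the box it occupies.  The
  filling sum of a word sums, over all fillings of the diagram by positions in the word
  that weakly increase along rows and down columns and obey these repetition rules,
  the product of the weights.

  The key step is a swap lemma: an unprimed letter immediately followed by a primed
  letter can be exchanged, with explicitly modified weights, without changing the
  filling sum.  It is proved by merging the two adjacent positions: each fibre of the
  merging map is a sum over subsets of a convex set of boxes, which factors into a
  product (sums over forced subsets), and the two products agree by a counting
  argument on convex box sets (the swap identity).

  The supertableau sum is the filling sum of the word x_n ... x_1 followed by primed
  letters for -a_k, k = n, n-1, ..., -|lam| (last section).  Moving every unprimed
  letter past all primed letters turns the primed letters into a prefix that vanishes
  on the box (1, 1); dropping it leaves the filling sum of the letters x_m - a_(m - c),
  which is the double Schur polynomial.
*)


lemma diag_mem: "(i, j) \<in> diagram lam \<longleftrightarrow> 1 \<le> i \<and> i \<le> length lam \<and> 1 \<le> j \<and> j \<le> lam ! (i - 1)"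
  by (simp add: diagram_def)

lemma finite_diagram: "finite (diagram lam)"
proof -
  have "diagram lam \<subseteq> {1..length lam} \<times> {1..Max (set lam)}"
  proof
    fix \<alpha> assume "\<alpha> \<in> diagram lam"
    then obtain i j where \<alpha>: "\<alpha> = (i, j)" "1 \<le> i" "i \<le> length lam" "1 \<le> j" "j \<le> lam ! (i - 1)"
      by (auto simp: diagram_def)
    then have "lam ! (i - 1) \<le> Max (set lam)" by simp
    then have "j \<le> Max (set lam)" using \<alpha> by linarith
    then show "\<alpha> \<in> {1..length lam} \<times> {1..Max (set lam)}" using \<alpha> by auto
  qed
  then show ?thesis using finite_subset by blast
qed

lemma diag_left: "(i, j') \<in> diagram lam \<Longrightarrow> 1 \<le> j \<Longrightarrow> j \<le> j' \<Longrightarrow> (i, j) \<in> diagram lam"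
  by (simp add: diagram_def)

lemma diag_up:
  assumes "is_partition lam" "(i', j) \<in> diagram lam" "1 \<le> i" "i \<le> i'"
  shows "(i, j) \<in> diagram lam"
proof (cases "i = i'")
  case False
  have "sorted_wrt (\<ge>) lam" using assms(1) by (simp add: is_partition_def)
  moreover have "i - 1 < i' - 1" "i' - 1 < length lam" using assms False by (auto simp: diagram_def)
  ultimately have "lam ! (i' - 1) \<le> lam ! (i - 1)" using sorted_wrt_nth_less by blast
  then show ?thesis using assms by (simp add: diagram_def)
qed (use assms in simp)

lemma diag_corner:
  assumes "is_partition lam" "(i, j) \<in> diagram lam"
  shows "(1, 1) \<in> diagram lam"
proof -
  have "1 \<le> i" "1 \<le> j" using assms(2) by (auto simp: diag_mem)
  then have "(1, j) \<in> diagram lam" using diag_up[OF assms] by simp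
  then show ?thesis using diag_left[of 1 j lam 1] \<open>1 \<le> j\<close> by simp
qed

lemma col_le_size: "(i, j) \<in> diagram lam \<Longrightarrow> j \<le> sum_list lam"
proof -
  assume "(i, j) \<in> diagram lam"
  then have "j \<le> lam ! (i - 1)" "i - 1 < length lam" by (auto simp: diag_mem)
  moreover have "lam ! (i - 1) \<le> sum_list lam"
    using member_le_sum_list[OF nth_mem[OF calculation(2)]] by simp
  ultimately show ?thesis by simp
qed

lemma col_len_bottom:
  assumes part: "is_partition lam" and \<alpha>: "(i, j) \<in> diagram lam"
  shows "i \<le> col_len lam j" "(col_len lam j, j) \<in> diagram lam"
proof -
  define S where "S = {i. (i, j) \<in> diagram lam}"
  have fS: "finite S" by (rule finite_subset[of _ "{1..length lam}"]) (auto simp: S_def diag_mem)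
  have iS: "i \<in> S" using \<alpha> by (simp add: S_def)
  define M where "M = Max S"
  have MS: "M \<in> S" "i \<le> M" using fS iS by (auto simp: M_def intro: Max_in)
  have "S = {1..M}"
  proof
    show "S \<subseteq> {1..M}" using fS by (auto simp: S_def diag_mem M_def)
    show "{1..M} \<subseteq> S" using diag_up[OF part, of M j] MS by (auto simp: S_def)
  qed
  then have "col_len lam j = M" by (simp add: col_len_def S_def[symmetric])
  then show "i \<le> col_len lam j" "(col_len lam j, j) \<in> diagram lam" using MS by (auto simp: S_def)
qed

lemma content_right: "content (i, j + 1) = content (i, j) + 1"
  by (simp add: content_def)

lemma content_up: "1 \<le> i \<Longrightarrow> content (i - 1, j) = content (i, j) + 1"
  by (simp add: content_def of_nat_diff)


definition forced_subsets :: "'a set \<Rightarrow> ('a \<Rightarrow> bool) \<Rightarrow> ('a \<Rightarrow> bool) \<Rightarrow> 'a set set" where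
  "forced_subsets T P Q = {s. s \<subseteq> T \<and> (\<forall>a\<in>T. P a \<longrightarrow> a \<in> s) \<and> (\<forall>a\<in>T. Q a \<longrightarrow> a \<notin> s)}"

lemma forced_subsets_empty: "forced_subsets {} P Q = {{}}"
  by (auto simp: forced_subsets_def)

lemma forced_subsets_insert:
  assumes "b \<notin> T"
  shows "forced_subsets (insert b T) P Q =
    (if Q b then {} else insert b ` forced_subsets T P Q) \<union> (if P b then {} else forced_subsets T P Q)"
proof (intro set_eqI iffI)
  fix s assume s: "s \<in> forced_subsets (insert b T) P Q"
  show "s \<in> (if Q b then {} else insert b ` forced_subsets T P Q) \<union> (if P b then {} else forced_subsets T P Q)"
  proof (cases "b \<in> s")
    case True
    then have "s = insert b (s - {b})" "s - {b} \<in> forced_subsets T P Q" "\<not> Q b"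
      using s assms by (auto simp: forced_subsets_def)
    then have "s \<in> insert b ` forced_subsets T P Q" by (metis image_eqI)
    then show ?thesis using \<open>\<not> Q b\<close> by simp
  next
    case False
    then show ?thesis using s by (auto simp: forced_subsets_def)
  qed
qed (use assms in \<open>auto simp: forced_subsets_def split: if_splits\<close>)

text \<open>Expanding a product of binomials: each element independently contributes \<open>f\<close>
  (if chosen) or \<open>g\<close> (if not), with forced choices killing the other option.\<close>

lemma sum_forced_subsets_prod:
  fixes f g :: "'a \<Rightarrow> 'r::comm_ring_1"
  assumes "finite T"
  shows "(\<Sum>s\<in>forced_subsets T P Q. \<Prod>a\<in>T. if a \<in> s then f a else g a)
       = (\<Prod>a\<in>T. (if Q a then 0 else f a) + (if P a then 0 else g a))"
  using assms
proof (induction T rule: finite_induct)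
  case empty
  then show ?case by (simp add: forced_subsets_empty)
next
  case (insert b T)
  let ?S = "forced_subsets T P Q"
  let ?h = "\<lambda>U s. \<Prod>a\<in>U. if a \<in> s then f a else g a"
  define Z where "Z = (\<Sum>s\<in>?S. ?h T s)"
  have fin: "finite ?S" using insert(1) by (auto simp: forced_subsets_def)
  have disj: "insert b ` ?S \<inter> ?S = {}" and inj: "inj_on (insert b) ?S"
    using insert(2) by (auto simp: forced_subsets_def inj_on_def)
  have with_b: "?h (insert b T) (insert b s) = f b * ?h T s" if "s \<in> ?S" for s
  proof -
    have "?h T (insert b s) = ?h T s" using insert(2) by (intro prod.cong) auto
    then show ?thesis using insert(1,2) by simp
  qed
  have without_b: "?h (insert b T) s = g b * ?h T s" if "s \<in> ?S" for s
    using that insert(1,2) by (auto simp: forced_subsets_def)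
  have "(\<Sum>s\<in>insert b ` ?S. ?h (insert b T) s) = (\<Sum>s\<in>?S. ?h (insert b T) (insert b s))"
    unfolding sum.reindex[OF inj] comp_def ..
  also have "\<dots> = (\<Sum>s\<in>?S. f b * ?h T s)"
    by (rule sum.cong[OF refl with_b])
  also have "\<dots> = f b * Z"
    by (simp add: Z_def sum_distrib_left)
  finally have "(\<Sum>s\<in>insert b ` ?S. ?h (insert b T) s) = f b * Z" .
  moreover have "(\<Sum>s\<in>?S. ?h (insert b T) s) = g b * Z"
    by (simp add: without_b Z_def sum_distrib_left)
  ultimately have "(\<Sum>s\<in>forced_subsets (insert b T) P Q. ?h (insert b T) s)
      = (if Q b then 0 else f b * Z) + (if P b then 0 else g b * Z)"
    unfolding forced_subsets_insert[OF insert(2)]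
    using fin disj by (auto simp: sum.union_disjoint)
  also have "\<dots> = ((if Q b then 0 else f b) + (if P b then 0 else g b)) * Z"
    by (simp add: distrib_right)
  also have "\<dots> = (\<Prod>a\<in>insert b T. (if Q a then 0 else f a) + (if P a then 0 else g a))"
    using insert(1,2) by (simp add: Z_def insert.IH)
  finally show ?case .
qed

section \<open>Convex sets of boxes and the swap identity\<close>

definition has_right :: "(nat \<times> nat) set \<Rightarrow> nat \<times> nat \<Rightarrow> bool" where
  "has_right T a \<longleftrightarrow> (\<exists>j'. snd a < j' \<and> (fst a, j') \<in> T)"
definition has_left :: "(nat \<times> nat) set \<Rightarrow> nat \<times> nat \<Rightarrow> bool" where
  "has_left T a \<longleftrightarrow> (\<exists>j'. j' < snd a \<and> (fst a, j') \<in> T)"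
definition has_above :: "(nat \<times> nat) set \<Rightarrow> nat \<times> nat \<Rightarrow> bool" where
  "has_above T a \<longleftrightarrow> (\<exists>i'. i' < fst a \<and> (i', snd a) \<in> T)"
definition has_below :: "(nat \<times> nat) set \<Rightarrow> nat \<times> nat \<Rightarrow> bool" where
  "has_below T a \<longleftrightarrow> (\<exists>i'. fst a < i' \<and> (i', snd a) \<in> T)"

text \<open>A set of boxes is convex if its rows and columns are intervals and it is closed
  under completing the two kinds of 2x2 squares that arise in a skew shape.  The boxes of
  a filling carrying a fixed value always form such a set.\<close>

definition convex_boxes :: "(nat \<times> nat) set \<Rightarrow> bool" where
  "convex_boxes T \<longleftrightarrow>
    (\<forall>i j j' j''. (i, j) \<in> T \<longrightarrow> (i, j'') \<in> T \<longrightarrow> j \<le> j' \<longrightarrow> j' \<le> j'' \<longrightarrow> (i, j') \<in> T) \<and>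
    (\<forall>i i' i'' j. (i, j) \<in> T \<longrightarrow> (i'', j) \<in> T \<longrightarrow> i \<le> i' \<longrightarrow> i' \<le> i'' \<longrightarrow> (i', j) \<in> T) \<and>
    (\<forall>i j. (i + 1, j) \<in> T \<longrightarrow> (i + 1, j + 1) \<in> T \<longrightarrow> (i, j) \<in> T \<longrightarrow> (i, j + 1) \<in> T) \<and>
    (\<forall>i j. (i, j) \<in> T \<longrightarrow> (i, j + 1) \<in> T \<longrightarrow> (i + 1, j + 1) \<in> T \<longrightarrow> (i + 1, j) \<in> T)"

text \<open>The factor of a box of \<open>T\<close> in the fibre sum when an unprimed letter of weight \<open>w\<close>
  is followed by a primed letter of weight \<open>v\<close> (\<open>xy_factor\<close>), resp. a primed letter of
  weight \<open>v\<close> by an unprimed letter of weight \<open>w\<close> (\<open>yx_factor\<close>).\<close>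

definition xy_factor :: "(nat \<times> nat) set \<Rightarrow> (int \<Rightarrow> 'r::comm_ring_1) \<Rightarrow> (int \<Rightarrow> 'r) \<Rightarrow> nat \<times> nat \<Rightarrow> 'r" where
  "xy_factor T w v a =
     (if has_above T a then 0 else w (content a)) + (if has_right T a then 0 else v (content a))"
definition yx_factor :: "(nat \<times> nat) set \<Rightarrow> (int \<Rightarrow> 'r::comm_ring_1) \<Rightarrow> (int \<Rightarrow> 'r) \<Rightarrow> nat \<times> nat \<Rightarrow> 'r" where
  "yx_factor T v w a =
     (if has_left T a then 0 else v (content a)) + (if has_below T a then 0 else w (content a))"

definition threshold :: "int \<Rightarrow> 'r::zero \<Rightarrow> int \<Rightarrow> 'r" where
  "threshold d y c = (if d \<le> c then y else 0)"

lemma prod_three_valued: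
  fixes x y z :: "'r::comm_monoid_mult"
  assumes "finite S" "R \<subseteq> S" "U \<subseteq> S" "R \<inter> U = {}"
  shows "(\<Prod>a\<in>S. if a \<in> R then x else if a \<in> U then y else z)
       = x ^ card R * y ^ card U * z ^ (card S - card R - card U)"
proof -
  have fin: "finite R" "finite U" "finite (S - (R \<union> U))" using assms finite_subset by auto
  have S: "S = R \<union> (U \<union> (S - (R \<union> U)))" using assms by auto
  have U: "(\<Prod>a\<in>U. if a \<in> R then x else if a \<in> U then y else z) = (\<Prod>a\<in>U. y)"
    using assms(4) by (intro prod.cong) auto
  have "(\<Prod>a\<in>S. if a \<in> R then x else if a \<in> U then y else z)
      = (\<Prod>a\<in>R. x) * ((\<Prod>a\<in>U. y) * (\<Prod>a\<in>S - (R \<union> U). z))"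
    using assms fin by (subst S, subst prod.union_disjoint, auto, subst prod.union_disjoint, auto simp: U)
  moreover have "card (S - (R \<union> U)) = card S - card R - card U"
    using assms fin by (simp add: card_Diff_subset card_Un_disjoint)
  ultimately show ?thesis by (simp add: mult.assoc)
qed

locale convex_box_set =
  fixes T :: "(nat \<times> nat) set"
  assumes finite: "finite T" and convex: "convex_boxes T"
begin

lemma row_convex: "(i, j) \<in> T \<Longrightarrow> (i, j'') \<in> T \<Longrightarrow> j \<le> j' \<Longrightarrow> j' \<le> j'' \<Longrightarrow> (i, j') \<in> T"
  using convex unfolding convex_boxes_def by blast
lemma col_convex: "(i, j) \<in> T \<Longrightarrow> (i'', j) \<in> T \<Longrightarrow> i \<le> i' \<Longrightarrow> i' \<le> i'' \<Longrightarrow> (i', j) \<in> T"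
  using convex unfolding convex_boxes_def by blast
lemma square_up_right: "(i + 1, j) \<in> T \<Longrightarrow> (i + 1, j + 1) \<in> T \<Longrightarrow> (i, j) \<in> T \<Longrightarrow> (i, j + 1) \<in> T"
  using convex unfolding convex_boxes_def by blast
lemma square_down_left: "(i, j) \<in> T \<Longrightarrow> (i, j + 1) \<in> T \<Longrightarrow> (i + 1, j + 1) \<in> T \<Longrightarrow> (i + 1, j) \<in> T"
  using convex unfolding convex_boxes_def by blast

lemma has_right_iff: "(i, j) \<in> T \<Longrightarrow> has_right T (i, j) \<longleftrightarrow> (i, j + 1) \<in> T"
  unfolding has_right_def using row_convex[of i j _ "j + 1"] by (auto simp: Suc_le_eq)
lemma has_left_iff: "(i, j) \<in> T \<Longrightarrow> has_left T (i, j) \<longleftrightarrow> 1 \<le> j \<and> (i, j - 1) \<in> T"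
  unfolding has_left_def using row_convex[of i _ j "j - 1"] by (auto intro: exI[of _ "j - 1"])
lemma has_below_iff: "(i, j) \<in> T \<Longrightarrow> has_below T (i, j) \<longleftrightarrow> (i + 1, j) \<in> T"
  unfolding has_below_def using col_convex[of i j _ "i + 1"] by (auto simp: Suc_le_eq)
lemma has_above_iff: "(i, j) \<in> T \<Longrightarrow> has_above T (i, j) \<longleftrightarrow> 1 \<le> i \<and> (i - 1, j) \<in> T"
  unfolding has_above_def using col_convex[of _ j i "i - 1"] by (auto intro: exI[of _ "i - 1"])

text \<open>Two configurations in which both products of the swap identity vanish, for
  arbitrary weights: a box with neighbours above and to the right forces a box with
  neighbours to the left and below, and conversely.\<close>

lemma vanish_above_right:
  assumes "(i, j) \<in> T" "has_above T (i, j)" "has_right T (i, j)"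
  shows "(\<Prod>a\<in>T. xy_factor T w v a) = 0" "(\<Prod>a\<in>T. yx_factor T v' w' a) = 0"
proof -
  have i: "1 \<le> i" "(i - 1, j) \<in> T" and r: "(i, j + 1) \<in> T"
    using assms has_above_iff has_right_iff by auto
  have "(i - 1 + 1, j) \<in> T" "(i - 1 + 1, j + 1) \<in> T" using assms(1) r i by auto
  then have corner: "(i - 1, j + 1) \<in> T" using square_up_right i by blast
  have "has_left T (i - 1, j + 1)" "has_below T (i - 1, j + 1)"
    using has_left_iff[OF corner] has_below_iff[OF corner] i r by auto
  then have "yx_factor T v' w' (i - 1, j + 1) = 0" by (simp add: yx_factor_def)
  then show "(\<Prod>a\<in>T. yx_factor T v' w' a) = 0" using corner finite by (intro prod_zero) auto
  have "xy_factor T w v (i, j) = 0" using assms by (simp add: xy_factor_def)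
  then show "(\<Prod>a\<in>T. xy_factor T w v a) = 0" using assms(1) finite by (intro prod_zero) auto
qed

lemma vanish_left_below:
  assumes "(i, j) \<in> T" "has_left T (i, j)" "has_below T (i, j)"
  shows "(\<Prod>a\<in>T. xy_factor T w v a) = 0" "(\<Prod>a\<in>T. yx_factor T v' w' a) = 0"
proof -
  have j: "1 \<le> j" "(i, j - 1) \<in> T" and b: "(i + 1, j) \<in> T"
    using assms has_left_iff has_below_iff by auto
  have "(i, j - 1 + 1) \<in> T" "(i + 1, j - 1 + 1) \<in> T" using assms(1) b j by auto
  then have corner: "(i + 1, j - 1) \<in> T" using square_down_left j by blast
  have "has_above T (i + 1, j - 1)" "has_right T (i + 1, j - 1)"
    using has_above_iff[OF corner] has_right_iff[OF corner] j b by auto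
  then have "xy_factor T w v (i + 1, j - 1) = 0" by (simp add: xy_factor_def)
  then show "(\<Prod>a\<in>T. xy_factor T w v a) = 0" using corner finite by (intro prod_zero) auto
  have "yx_factor T v' w' (i, j) = 0" using assms by (simp add: yx_factor_def)
  then show "(\<Prod>a\<in>T. yx_factor T v' w' a) = 0" using assms(1) finite by (intro prod_zero) auto
qed

text \<open>When no box has such a pair of neighbours, vertical neighbours at low content
  still kill both products of the swap identity.\<close>

context
  fixes d :: int and y :: "'r::comm_ring_1" and w :: "int \<Rightarrow> 'r"
  assumes no_above_right: "\<forall>a\<in>T. \<not> (has_above T a \<and> has_right T a)"
    and no_left_below: "\<forall>a\<in>T. \<not> (has_left T a \<and> has_below T a)"
begin

lemma vanish_above_low:
  assumes "(i, j) \<in> T" "has_above T (i, j)" "content (i, j) < d"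
  shows "(\<Prod>a\<in>T. xy_factor T w (threshold d y) a) = 0"
    "(\<Prod>a\<in>T. yx_factor T (threshold (d + 1) y) (\<lambda>c. w c + (if c = d then y else 0)) a) = 0"
proof -
  have i: "1 \<le> i" and up: "(i - 1, j) \<in> T" using assms has_above_iff by auto
  have "xy_factor T w (threshold d y) (i, j) = 0"
    using assms no_above_right by (auto simp: xy_factor_def threshold_def)
  then show "(\<Prod>a\<in>T. xy_factor T w (threshold d y) a) = 0"
    using assms(1) finite by (intro prod_zero) auto
  have "has_below T (i - 1, j)" using has_below_iff[OF up] assms(1) i by simp
  moreover have "content (i - 1, j) < d + 1" using content_up[OF i, of j] assms(3) by simp
  ultimately have "yx_factor T (threshold (d + 1) y) (\<lambda>c. w c + (if c = d then y else 0)) (i - 1, j) = 0"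
    using no_left_below up by (auto simp: yx_factor_def threshold_def)
  then show "(\<Prod>a\<in>T. yx_factor T (threshold (d + 1) y) (\<lambda>c. w c + (if c = d then y else 0)) a) = 0"
    using up finite by (intro prod_zero) auto
qed

lemma vanish_below_low:
  assumes "(i, j) \<in> T" "has_below T (i, j)" "content (i, j) \<le> d"
  shows "(\<Prod>a\<in>T. xy_factor T w (threshold d y) a) = 0"
    "(\<Prod>a\<in>T. yx_factor T (threshold (d + 1) y) (\<lambda>c. w c + (if c = d then y else 0)) a) = 0"
proof -
  have down: "(i + 1, j) \<in> T" using assms has_below_iff by auto
  have "yx_factor T (threshold (d + 1) y) (\<lambda>c. w c + (if c = d then y else 0)) (i, j) = 0"
    using assms no_left_below by (auto simp: yx_factor_def threshold_def)
  then show "(\<Prod>a\<in>T. yx_factor T (threshold (d + 1) y) (\<lambda>c. w c + (if c = d then y else 0)) a) = 0"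
    using assms(1) finite by (intro prod_zero) auto
  have "has_above T (i + 1, j)" using has_above_iff[OF down] assms(1) by simp
  moreover have "content (i + 1, j) < d" using assms(3) by (simp add: content_def)
  ultimately have "xy_factor T w (threshold d y) (i + 1, j) = 0"
    using no_above_right down by (auto simp: xy_factor_def threshold_def)
  then show "(\<Prod>a\<in>T. xy_factor T w (threshold d y) a) = 0"
    using down finite by (intro prod_zero) auto
qed

end

text \<open>Shifting right (resp. up) by one box is a bijection between boxes with a right
  (resp. upper) neighbour and boxes with a left (resp. lower) neighbour, raising the
  content by one.\<close>

lemma card_left_eq_right:
  "card {a\<in>T. d + 1 \<le> content a \<and> has_left T a} = card {a\<in>T. d \<le> content a \<and> has_right T a}"
proof -
  let ?R = "{a\<in>T. d \<le> content a \<and> has_right T a}"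
  let ?shift = "\<lambda>(i, j). (i, j + 1)"
  have "{a\<in>T. d + 1 \<le> content a \<and> has_left T a} = ?shift ` ?R"
  proof (intro set_eqI iffI)
    fix b assume b: "b \<in> {a\<in>T. d + 1 \<le> content a \<and> has_left T a}"
    obtain i j where ij: "b = (i, j)" by (cases b)
    then have j: "1 \<le> j" "(i, j - 1) \<in> T" using b has_left_iff by auto
    then have "(i, j - 1) \<in> ?R"
      using b ij has_right_iff[OF j(2)] by (auto simp: content_def of_nat_diff)
    then show "b \<in> ?shift ` ?R" using ij j by (auto intro!: image_eqI[of _ _ "(i, j - 1)"])
  next
    fix b assume "b \<in> ?shift ` ?R"
    then obtain i j where ij: "(i, j) \<in> ?R" "b = (i, j + 1)" by auto
    then have r: "(i, j + 1) \<in> T" using has_right_iff by auto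
    then show "b \<in> {a\<in>T. d + 1 \<le> content a \<and> has_left T a}"
      using ij has_left_iff[OF r] content_right[of i j] by auto
  qed
  moreover have "inj_on ?shift ?R" by (auto simp: inj_on_def)
  ultimately show ?thesis by (simp add: card_image)
qed

lemma card_below_eq_above:
  "card {a\<in>T. d + 1 \<le> content a \<and> has_below T a} = card {a\<in>T. d \<le> content a \<and> has_above T a}"
proof -
  let ?U = "{a\<in>T. d \<le> content a \<and> has_above T a}"
  let ?shift = "\<lambda>(i, j). (i - 1, j)"
  have i1: "1 \<le> fst a" if "a \<in> ?U" for a using that has_above_iff by (cases a) auto
  have "{a\<in>T. d + 1 \<le> content a \<and> has_below T a} = ?shift ` ?U"
  proof (intro set_eqI iffI)
    fix b assume b: "b \<in> {a\<in>T. d + 1 \<le> content a \<and> has_below T a}"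
    obtain i j where ij: "b = (i, j)" by (cases b)
    then have down: "(i + 1, j) \<in> T" using b has_below_iff by auto
    then have "(i + 1, j) \<in> ?U" using b ij has_above_iff[OF down] by (auto simp: content_def)
    then show "b \<in> ?shift ` ?U" using ij by (auto intro!: image_eqI[of _ _ "(i + 1, j)"])
  next
    fix b assume "b \<in> ?shift ` ?U"
    then obtain i j where ij: "(i, j) \<in> ?U" "b = (i - 1, j)" by auto
    then have i: "1 \<le> i" "(i - 1, j) \<in> T" using has_above_iff by auto
    then show "b \<in> {a\<in>T. d + 1 \<le> content a \<and> has_below T a}"
      using ij has_below_iff[OF i(2)] content_up[OF i(1), of j] by auto
  qed
  moreover have "inj_on ?shift ?U"
  proof (rule inj_onI)
    fix a b assume "a \<in> ?U" "b \<in> ?U" "?shift a = ?shift b"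
    then show "a = b" using i1[of a] i1[of b] by (cases a, cases b) auto
  qed
  ultimately show ?thesis by (simp add: card_image)
qed

text \<open>The remaining configuration: every box of content at least \<open>d\<close> contributes
  \<open>x\<close>, \<open>y\<close> or \<open>x + y\<close> on both sides, and the counting lemmas above match the
  exponents.\<close>

lemma swap_identity_generic:
  fixes w :: "int \<Rightarrow> 'r::comm_ring_1"
  assumes w: "\<And>c. d \<le> c \<Longrightarrow> w c = x"
    and no_above_right: "\<forall>a\<in>T. \<not> (has_above T a \<and> has_right T a)"
    and no_left_below: "\<forall>a\<in>T. \<not> (has_left T a \<and> has_below T a)"
    and above: "\<forall>a\<in>T. has_above T a \<longrightarrow> d \<le> content a"
    and below: "\<forall>a\<in>T. has_below T a \<longrightarrow> d < content a"
  shows "(\<Prod>a\<in>T. xy_factor T w (threshold d y) a)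
       = (\<Prod>a\<in>T. yx_factor T (threshold (d + 1) y) (\<lambda>c. w c + (if c = d then y else 0)) a)"
proof -
  let ?xy = "xy_factor T w (threshold d y)"
  let ?yx = "yx_factor T (threshold (d + 1) y) (\<lambda>c. w c + (if c = d then y else 0))"
  define Tl where "Tl = {a\<in>T. content a < d}"
  define Tg where "Tg = {a\<in>T. d \<le> content a}"
  define R where "R = {a\<in>T. d \<le> content a \<and> has_right T a}"
  define U where "U = {a\<in>T. d \<le> content a \<and> has_above T a}"
  define L where "L = {a\<in>T. d + 1 \<le> content a \<and> has_left T a}"
  define Dn where "Dn = {a\<in>T. d + 1 \<le> content a \<and> has_below T a}"
  have fin: "finite Tl" "finite Tg" using finite by (auto simp: Tl_def Tg_def)
  have split: "(\<Prod>a\<in>T. f a) = (\<Prod>a\<in>Tl. f a) * (\<Prod>a\<in>Tg. f a)" for f :: "nat \<times> nat \<Rightarrow> 'r"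
  proof -
    have "T = Tl \<union> Tg" "Tl \<inter> Tg = {}" by (auto simp: Tl_def Tg_def)
    then show ?thesis using prod.union_disjoint[OF fin] by metis
  qed
  have low: "(\<Prod>a\<in>Tl. ?xy a) = (\<Prod>a\<in>Tl. ?yx a)"
    using above below by (intro prod.cong) (auto simp: Tl_def xy_factor_def yx_factor_def threshold_def)
  have "(\<Prod>a\<in>Tg. ?xy a) = (\<Prod>a\<in>Tg. if a \<in> R then x else if a \<in> U then y else x + y)"
    using w no_above_right
    by (intro prod.cong) (auto simp: Tg_def R_def U_def xy_factor_def threshold_def)
  also have "\<dots> = x ^ card R * y ^ card U * (x + y) ^ (card Tg - card R - card U)"
    using no_above_right by (intro prod_three_valued fin) (auto simp: Tg_def R_def U_def)
  also have "\<dots> = x ^ card L * y ^ card Dn * (x + y) ^ (card Tg - card L - card Dn)"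
    using card_left_eq_right[of d] card_below_eq_above[of d] by (simp add: R_def U_def L_def Dn_def)
  also have "\<dots> = (\<Prod>a\<in>Tg. if a \<in> L then x else if a \<in> Dn then y else x + y)"
    using no_left_below by (intro prod_three_valued[symmetric] fin) (auto simp: Tg_def L_def Dn_def)
  also have "\<dots> = (\<Prod>a\<in>Tg. ?yx a)"
    using w no_left_below below
    by (intro prod.cong) (auto simp: Tg_def L_def Dn_def yx_factor_def threshold_def algebra_simps)
  finally show ?thesis using low by (simp add: split)
qed

theorem swap_identity:
  fixes w :: "int \<Rightarrow> 'r::comm_ring_1"
  assumes w: "\<And>c. d \<le> c \<Longrightarrow> w c = x"
  shows "(\<Prod>a\<in>T. xy_factor T w (threshold d y) a)
       = (\<Prod>a\<in>T. yx_factor T (threshold (d + 1) y) (\<lambda>c. w c + (if c = d then y else 0)) a)"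
proof (cases "\<exists>a\<in>T. (has_above T a \<and> has_right T a) \<or> (has_left T a \<and> has_below T a)")
  case True
  then obtain i j where ij: "(i, j) \<in> T"
    "(has_above T (i, j) \<and> has_right T (i, j)) \<or> (has_left T (i, j) \<and> has_below T (i, j))"
    by auto
  then show ?thesis
  proof (elim disjE conjE)
    assume h: "has_above T (i, j)" "has_right T (i, j)"
    show ?thesis by (simp add: vanish_above_right[OF ij(1) h])
  next
    assume h: "has_left T (i, j)" "has_below T (i, j)"
    show ?thesis by (simp add: vanish_left_below[OF ij(1) h])
  qed
next
  case False
  then have no_above_right: "\<forall>a\<in>T. \<not> (has_above T a \<and> has_right T a)"
    and no_left_below: "\<forall>a\<in>T. \<not> (has_left T a \<and> has_below T a)" by auto
  show ?thesis
  proof (cases "\<exists>a\<in>T. (has_above T a \<and> content a < d) \<or> (has_below T a \<and> content a \<le> d)")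
    case True
    then obtain i j where ij: "(i, j) \<in> T"
      "(has_above T (i, j) \<and> content (i, j) < d) \<or> (has_below T (i, j) \<and> content (i, j) \<le> d)"
      by auto
    then show ?thesis
    proof (elim disjE conjE)
      assume h: "has_above T (i, j)" "content (i, j) < d"
      show ?thesis by (simp add: vanish_above_low[OF no_above_right no_left_below ij(1) h])
    next
      assume h: "has_below T (i, j)" "content (i, j) \<le> d"
      show ?thesis by (simp add: vanish_below_low[OF no_above_right no_left_below ij(1) h])
    qed
  next
    case False
    then show ?thesis
      by (intro swap_identity_generic[OF w no_above_right no_left_below]) auto
  qed
qed

end

section \<open>Fillings by a word of letters\<close>

text \<open>A letter \<open>(True, f)\<close> is unprimed and \<open>(False, f)\<close> is primed; \<open>f c\<close> is its weight
  in a box of content \<open>c\<close>.\<close>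

type_synonym 'r letter = "bool \<times> (int \<Rightarrow> 'r)"

definition row_ok :: "'r letter list \<Rightarrow> nat \<Rightarrow> nat \<Rightarrow> bool" where
  "row_ok Ls u v \<longleftrightarrow> u \<le> v \<and> (u = v \<longrightarrow> fst (Ls ! u))"
definition col_ok :: "'r letter list \<Rightarrow> nat \<Rightarrow> nat \<Rightarrow> bool" where
  "col_ok Ls u v \<longleftrightarrow> u \<le> v \<and> (u = v \<longrightarrow> \<not> fst (Ls ! u))"

definition filling :: "'r letter list \<Rightarrow> nat list \<Rightarrow> (nat \<times> nat \<Rightarrow> nat) \<Rightarrow> bool" where
  "filling Ls lam F \<longleftrightarrow> (\<forall>a. a \<notin> diagram lam \<longrightarrow> F a = 0) \<and> (\<forall>a\<in>diagram lam. F a < length Ls) \<and>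
     (\<forall>i j j'. (i, j) \<in> diagram lam \<longrightarrow> (i, j') \<in> diagram lam \<longrightarrow> j < j' \<longrightarrow> row_ok Ls (F (i, j)) (F (i, j'))) \<and>
     (\<forall>i i' j. (i, j) \<in> diagram lam \<longrightarrow> (i', j) \<in> diagram lam \<longrightarrow> i < i' \<longrightarrow> col_ok Ls (F (i, j)) (F (i', j)))"

definition filling_weight :: "('r::comm_ring_1) letter list \<Rightarrow> nat list \<Rightarrow> (nat \<times> nat \<Rightarrow> nat) \<Rightarrow> 'r" where
  "filling_weight Ls lam F = (\<Prod>a\<in>diagram lam. snd (Ls ! F a) (content a))"

definition filling_sum :: "('r::comm_ring_1) letter list \<Rightarrow> nat list \<Rightarrow> 'r" where
  "filling_sum Ls lam = (\<Sum>F\<in>{F. filling Ls lam F}. filling_weight Ls lam F)"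

definition bounded_funs :: "'a set \<Rightarrow> nat \<Rightarrow> ('a \<Rightarrow> nat) set" where
  "bounded_funs D N = {G. (\<forall>a. a \<notin> D \<longrightarrow> G a = 0) \<and> (\<forall>a\<in>D. G a < N)}"

lemma finite_bounded_funs:
  assumes "finite D"
  shows "finite (bounded_funs D N)"
proof -
  have "bounded_funs D N \<subseteq> {f. \<forall>x. (x \<in> D \<longrightarrow> f x \<in> {0..<N}) \<and> (x \<notin> D \<longrightarrow> f x = 0)}"
    by (auto simp: bounded_funs_def)
  then show ?thesis using finite_set_of_finite_funs[of D "{0..<N}" 0] assms finite_subset by auto
qed

lemma filling_bounded: "filling Ls lam F \<Longrightarrow> F \<in> bounded_funs (diagram lam) (length Ls)"
  by (simp add: filling_def bounded_funs_def)

lemma finite_fillings: "finite {F. filling Ls lam F}"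
  using finite_bounded_funs[OF finite_diagram] filling_bounded
  by (metis (no_types, lifting) finite_subset mem_Collect_eq subsetI)

lemma filling_corner_min:
  assumes part: "is_partition lam" and F: "filling Ls lam F" and a: "(i, j) \<in> diagram lam"
  shows "F (1, 1) \<le> F (i, j)"
proof -
  have ij: "1 \<le> i" "1 \<le> j" using a by (auto simp: diag_mem)
  have a1: "(1, j) \<in> diagram lam" using diag_up[OF part a] ij by simp
  have "F (1, 1) \<le> F (1, j)"
  proof (cases "j = 1")
    case False
    then have "row_ok Ls (F (1, 1)) (F (1, j))"
      using F a1 diag_corner[OF part a] ij unfolding filling_def by auto
    then show ?thesis by (simp add: row_ok_def)
  qed simp
  also have "F (1, j) \<le> F (i, j)"
  proof (cases "i = 1")
    case False
    then have "col_ok Ls (F (1, j)) (F (i, j))" using F a1 a ij unfolding filling_def by auto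
    then show ?thesis by (simp add: col_ok_def)
  qed simp
  finally show ?thesis .
qed


section \<open>Merging two adjacent positions\<close>

text \<open>Merging positions \<open>p\<close> and \<open>p + 1\<close> of a filling gives a function \<open>G\<close>; conversely a
  filling in the fibre over \<open>G\<close> is recovered from the subset \<open>s\<close> of the level set
  \<open>G = p\<close> carrying position \<open>p\<close>.  The map \<open>lift_at\<close> returns merged values \<open>\<noteq> p\<close> to
  their original positions, and \<open>merged_ok\<close> collects the filling conditions not
  involving two boxes of the level set.\<close>

definition merge_at :: "nat \<Rightarrow> (nat \<times> nat \<Rightarrow> nat) \<Rightarrow> nat \<times> nat \<Rightarrow> nat" where
  "merge_at p F = (\<lambda>a. if F a \<le> p then F a else F a - 1)"
definition split_at :: "(nat \<times> nat) set \<Rightarrow> nat \<Rightarrow> (nat \<times> nat \<Rightarrow> nat) \<Rightarrow> (nat \<times> nat) set \<Rightarrow> nat \<times> nat \<Rightarrow> nat" where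
  "split_at D p G s = (\<lambda>a. if a \<notin> D then 0 else if G a < p then G a
     else if G a = p then (if a \<in> s then p else Suc p) else Suc (G a))"
definition lift_at :: "nat \<Rightarrow> (nat \<times> nat \<Rightarrow> nat) \<Rightarrow> nat \<times> nat \<Rightarrow> nat" where
  "lift_at p G a = (if G a \<le> p then G a else Suc (G a))"
definition level_set :: "(nat \<times> nat) set \<Rightarrow> nat \<Rightarrow> (nat \<times> nat \<Rightarrow> nat) \<Rightarrow> (nat \<times> nat) set" where
  "level_set D p G = {a\<in>D. G a = p}"
definition merged_ok :: "'r letter list \<Rightarrow> nat list \<Rightarrow> nat \<Rightarrow> (nat \<times> nat \<Rightarrow> nat) \<Rightarrow> bool" where
  "merged_ok Ls lam p G \<longleftrightarrow>
     (\<forall>i j j'. (i, j) \<in> diagram lam \<longrightarrow> (i, j') \<in> diagram lam \<longrightarrow> j < j' \<longrightarrow> \<not> (G (i, j) = p \<and> G (i, j') = p) \<longrightarrow>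
        row_ok Ls (lift_at p G (i, j)) (lift_at p G (i, j'))) \<and>
     (\<forall>i i' j. (i, j) \<in> diagram lam \<longrightarrow> (i', j) \<in> diagram lam \<longrightarrow> i < i' \<longrightarrow> \<not> (G (i, j) = p \<and> G (i', j) = p) \<longrightarrow>
        col_ok Ls (lift_at p G (i, j)) (lift_at p G (i', j)))"

lemma split_row_ok_iff:
  assumes "a \<in> D" "b \<in> D" "\<not> (G a = p \<and> G b = p)"
  shows "row_ok Ls (split_at D p G s a) (split_at D p G s b) \<longleftrightarrow> row_ok Ls (lift_at p G a) (lift_at p G b)"
  using assms unfolding row_ok_def split_at_def lift_at_def
  by (cases "G a < p"; cases "G a = p"; cases "G b < p"; cases "G b = p"; auto)

lemma split_col_ok_iff:
  assumes "a \<in> D" "b \<in> D" "\<not> (G a = p \<and> G b = p)"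
  shows "col_ok Ls (split_at D p G s a) (split_at D p G s b) \<longleftrightarrow> col_ok Ls (lift_at p G a) (lift_at p G b)"
  using assms unfolding col_ok_def split_at_def lift_at_def
  by (cases "G a < p"; cases "G a = p"; cases "G b < p"; cases "G b = p"; auto)

lemma filling_splitD:
  assumes F: "filling Ls lam (split_at (diagram lam) p G s)"
  shows "merged_ok Ls lam p G \<and>
    (\<forall>i j j'. (i, j) \<in> level_set (diagram lam) p G \<longrightarrow> (i, j') \<in> level_set (diagram lam) p G \<longrightarrow> j < j' \<longrightarrow>
        row_ok Ls (split_at (diagram lam) p G s (i, j)) (split_at (diagram lam) p G s (i, j'))) \<and>
    (\<forall>i i' j. (i, j) \<in> level_set (diagram lam) p G \<longrightarrow> (i', j) \<in> level_set (diagram lam) p G \<longrightarrow> i < i' \<longrightarrow>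
        col_ok Ls (split_at (diagram lam) p G s (i, j)) (split_at (diagram lam) p G s (i', j)))"
proof (intro conjI)
  let ?D = "diagram lam" let ?F = "split_at ?D p G s"
  show "merged_ok Ls lam p G" unfolding merged_ok_def
  proof (intro conjI allI impI)
    fix i j j' assume h: "(i, j) \<in> ?D" "(i, j') \<in> ?D" "j < j'" "\<not> (G (i, j) = p \<and> G (i, j') = p)"
    then have "row_ok Ls (?F (i, j)) (?F (i, j'))" using F by (auto simp: filling_def)
    then show "row_ok Ls (lift_at p G (i, j)) (lift_at p G (i, j'))"
      using split_row_ok_iff[OF h(1,2,4), where Ls=Ls and s=s] by simp
  next
    fix i i' j assume h: "(i, j) \<in> ?D" "(i', j) \<in> ?D" "i < i'" "\<not> (G (i, j) = p \<and> G (i', j) = p)"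
    then have "col_ok Ls (?F (i, j)) (?F (i', j))" using F by (auto simp: filling_def)
    then show "col_ok Ls (lift_at p G (i, j)) (lift_at p G (i', j))"
      using split_col_ok_iff[OF h(1,2,4), where Ls=Ls and s=s] by simp
  qed
qed (use F in \<open>auto simp: filling_def level_set_def\<close>)

lemma filling_splitI:
  assumes G: "G \<in> bounded_funs (diagram lam) (length Ls - 1)" and p: "Suc p < length Ls"
    and ok: "merged_ok Ls lam p G \<and>
    (\<forall>i j j'. (i, j) \<in> level_set (diagram lam) p G \<longrightarrow> (i, j') \<in> level_set (diagram lam) p G \<longrightarrow> j < j' \<longrightarrow>
        row_ok Ls (split_at (diagram lam) p G s (i, j)) (split_at (diagram lam) p G s (i, j'))) \<and>
    (\<forall>i i' j. (i, j) \<in> level_set (diagram lam) p G \<longrightarrow> (i', j) \<in> level_set (diagram lam) p G \<longrightarrow> i < i' \<longrightarrow>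
        col_ok Ls (split_at (diagram lam) p G s (i, j)) (split_at (diagram lam) p G s (i', j)))"
  shows "filling Ls lam (split_at (diagram lam) p G s)"
  unfolding filling_def
proof (intro conjI allI impI ballI)
  let ?D = "diagram lam" let ?F = "split_at ?D p G s"
  fix i j j' assume h: "(i, j) \<in> ?D" "(i, j') \<in> ?D" "j < j'"
  show "row_ok Ls (?F (i, j)) (?F (i, j'))"
  proof (cases "G (i, j) = p \<and> G (i, j') = p")
    case True then show ?thesis using ok h by (auto simp: level_set_def)
  next
    case False then show ?thesis
      using split_row_ok_iff[OF h(1,2) False, where Ls=Ls and s=s] ok h by (auto simp: merged_ok_def)
  qed
next
  let ?D = "diagram lam" let ?F = "split_at ?D p G s"
  fix i i' j assume h: "(i, j) \<in> ?D" "(i', j) \<in> ?D" "i < i'"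
  show "col_ok Ls (?F (i, j)) (?F (i', j))"
  proof (cases "G (i, j) = p \<and> G (i', j) = p")
    case True then show ?thesis using ok h by (auto simp: level_set_def)
  next
    case False then show ?thesis
      using split_col_ok_iff[OF h(1,2) False, where Ls=Ls and s=s] ok h by (auto simp: merged_ok_def)
  qed
qed (use G p in \<open>auto simp: split_at_def bounded_funs_def\<close>)

lemma filling_split_iff:
  assumes G: "G \<in> bounded_funs (diagram lam) (length Ls - 1)" and p: "Suc p < length Ls"
  shows "filling Ls lam (split_at (diagram lam) p G s) \<longleftrightarrow> merged_ok Ls lam p G \<and>
    (\<forall>i j j'. (i, j) \<in> level_set (diagram lam) p G \<longrightarrow> (i, j') \<in> level_set (diagram lam) p G \<longrightarrow> j < j' \<longrightarrow>
        row_ok Ls (split_at (diagram lam) p G s (i, j)) (split_at (diagram lam) p G s (i, j'))) \<and>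
    (\<forall>i i' j. (i, j) \<in> level_set (diagram lam) p G \<longrightarrow> (i', j) \<in> level_set (diagram lam) p G \<longrightarrow> i < i' \<longrightarrow>
        col_ok Ls (split_at (diagram lam) p G s (i, j)) (split_at (diagram lam) p G s (i', j)))"
  using filling_splitD filling_splitI[OF G p] by blast

lemma merge_split:
  assumes "G \<in> bounded_funs D N" "s \<subseteq> level_set D p G"
  shows "merge_at p (split_at D p G s) = G"
proof
  fix a
  have z: "a \<notin> D \<Longrightarrow> G a = 0" using assms(1) unfolding bounded_funs_def by blast
  show "merge_at p (split_at D p G s) a = G a"
    using assms z by (cases "a \<in> D") (auto simp: merge_at_def split_at_def level_set_def)
qed

lemma split_merge:
  assumes "filling Ls lam F" "merge_at p F = G"
  shows "F = split_at (diagram lam) p G {a\<in>diagram lam. F a = p}"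
proof
  fix a show "F a = split_at (diagram lam) p G {a\<in>diagram lam. F a = p} a"
  proof (cases "a \<in> diagram lam")
    case False
    have "F a = 0" using assms(1) False unfolding filling_def by blast
    then show ?thesis using False by (simp add: split_at_def)
  next
    case True
    have Ga: "G a = (if F a \<le> p then F a else F a - 1)" using assms(2) by (auto simp: merge_at_def)
    show ?thesis using True Ga by (auto simp: split_at_def)
  qed
qed

lemma split_inj: "inj_on (split_at D p G) (Pow (level_set D p G))"
proof (rule inj_onI)
  fix s s' assume s: "s \<in> Pow (level_set D p G)" "s' \<in> Pow (level_set D p G)"
    and eq: "split_at D p G s = split_at D p G s'"
  show "s = s'"
  proof (rule set_eqI)
    fix a
    show "a \<in> s \<longleftrightarrow> a \<in> s'"
    proof (cases "a \<in> level_set D p G")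
      case True
      have "split_at D p G s a = split_at D p G s' a" using eq by simp
      then show ?thesis using True by (auto simp: split_at_def level_set_def split: if_splits)
    next
      case False then show ?thesis using s by auto
    qed
  qed
qed

lemma fibre_eq:
  assumes "G \<in> bounded_funs (diagram lam) N"
  shows "{F. filling Ls lam F \<and> merge_at p F = G} =
    split_at (diagram lam) p G ` {s. s \<subseteq> level_set (diagram lam) p G \<and> filling Ls lam (split_at (diagram lam) p G s)}"
    (is "?fibre = ?split ` ?subsets")
proof
  show "?fibre \<subseteq> ?split ` ?subsets"
  proof
    fix F assume F: "F \<in> ?fibre"
    let ?s = "{a\<in>diagram lam. F a = p}"
    have "F = ?split ?s" using F split_merge by blast
    moreover have "?s \<subseteq> level_set (diagram lam) p G" using F by (auto simp: level_set_def merge_at_def)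
    ultimately show "F \<in> ?split ` ?subsets" using F by (intro image_eqI[of _ _ ?s]) auto
  qed
  show "?split ` ?subsets \<subseteq> ?fibre" using merge_split[OF assms] by auto
qed

text \<open>The weight of the boxes outside the level set, which is common to all fillings in
  a fibre.\<close>

definition outer_weight :: "('r::comm_ring_1) letter list \<Rightarrow> nat list \<Rightarrow> nat \<Rightarrow> (nat \<times> nat \<Rightarrow> nat) \<Rightarrow> 'r" where
  "outer_weight Ls lam p G =
     (\<Prod>a\<in>diagram lam - level_set (diagram lam) p G. snd (Ls ! lift_at p G a) (content a))"

lemma filling_weight_split:
  assumes "s \<subseteq> level_set (diagram lam) p G"
  shows "filling_weight Ls lam (split_at (diagram lam) p G s) = outer_weight Ls lam p G *
    (\<Prod>a\<in>level_set (diagram lam) p G. if a \<in> s then snd (Ls ! p) (content a) else snd (Ls ! Suc p) (content a))"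
proof -
  let ?D = "diagram lam" let ?T = "level_set (diagram lam) p G"
  have "filling_weight Ls lam (split_at ?D p G s) =
      (\<Prod>a\<in>?D - ?T. snd (Ls ! split_at ?D p G s a) (content a)) *
      (\<Prod>a\<in>?T. snd (Ls ! split_at ?D p G s a) (content a))"
    unfolding filling_weight_def by (rule prod.subset_diff) (auto simp: level_set_def finite_diagram)
  also have "(\<Prod>a\<in>?D - ?T. snd (Ls ! split_at ?D p G s a) (content a))
      = (\<Prod>a\<in>?D - ?T. snd (Ls ! lift_at p G a) (content a))"
    by (rule prod.cong) (auto simp: split_at_def lift_at_def level_set_def)
  also have "(\<Prod>a\<in>?T. snd (Ls ! split_at ?D p G s a) (content a)) =
     (\<Prod>a\<in>?T. if a \<in> s then snd (Ls ! p) (content a) else snd (Ls ! Suc p) (content a))"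
    by (rule prod.cong) (auto simp: split_at_def level_set_def)
  finally show ?thesis by (simp add: outer_weight_def)
qed

lemma level_ok_xy:
  assumes "fst (Ls ! p)" "\<not> fst (Ls ! Suc p)" "a \<in> level_set D p G" "b \<in> level_set D p G"
  shows "row_ok Ls (split_at D p G s a) (split_at D p G s b) \<longleftrightarrow> a \<in> s"
    and "col_ok Ls (split_at D p G s a) (split_at D p G s b) \<longleftrightarrow> b \<notin> s"
  using assms by (auto simp: row_ok_def col_ok_def split_at_def level_set_def)

lemma level_ok_yx:
  assumes "\<not> fst (Ls ! p)" "fst (Ls ! Suc p)" "a \<in> level_set D p G" "b \<in> level_set D p G"
  shows "row_ok Ls (split_at D p G s a) (split_at D p G s b) \<longleftrightarrow> b \<notin> s"
    and "col_ok Ls (split_at D p G s a) (split_at D p G s b) \<longleftrightarrow> a \<in> s"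
  using assms by (auto simp: row_ok_def col_ok_def split_at_def level_set_def)

lemma admissible_subsets_xy:
  assumes G: "G \<in> bounded_funs (diagram lam) (length Ls - 1)" and p: "Suc p < length Ls"
    and t: "fst (Ls ! p)" "\<not> fst (Ls ! Suc p)"
  defines "T \<equiv> level_set (diagram lam) p G"
  shows "{s. s \<subseteq> T \<and> filling Ls lam (split_at (diagram lam) p G s)} =
    (if merged_ok Ls lam p G then forced_subsets T (has_right T) (has_above T) else {})"
proof -
  have "s \<subseteq> T \<and> filling Ls lam (split_at (diagram lam) p G s) \<longleftrightarrow>
     merged_ok Ls lam p G \<and> s \<in> forced_subsets T (has_right T) (has_above T)" for s
  proof -
    have "(\<forall>i j j'. (i, j) \<in> T \<longrightarrow> (i, j') \<in> T \<longrightarrow> j < j' \<longrightarrow>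
        row_ok Ls (split_at (diagram lam) p G s (i, j)) (split_at (diagram lam) p G s (i, j'))) \<longleftrightarrow>
        (\<forall>a\<in>T. has_right T a \<longrightarrow> a \<in> s)"
      using level_ok_xy(1)[OF t, of _ "diagram lam" G _ s] by (auto simp: has_right_def T_def)
    moreover have "(\<forall>i i' j. (i, j) \<in> T \<longrightarrow> (i', j) \<in> T \<longrightarrow> i < i' \<longrightarrow>
        col_ok Ls (split_at (diagram lam) p G s (i, j)) (split_at (diagram lam) p G s (i', j))) \<longleftrightarrow>
        (\<forall>a\<in>T. has_above T a \<longrightarrow> a \<notin> s)"
      using level_ok_xy(2)[OF t, of _ "diagram lam" G _ s] by (auto simp: has_above_def T_def)
    ultimately show ?thesis
      using filling_split_iff[OF G p, of s] by (auto simp: forced_subsets_def T_def)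
  qed
  then show ?thesis by auto
qed

lemma admissible_subsets_yx:
  assumes G: "G \<in> bounded_funs (diagram lam) (length Ls - 1)" and p: "Suc p < length Ls"
    and t: "\<not> fst (Ls ! p)" "fst (Ls ! Suc p)"
  defines "T \<equiv> level_set (diagram lam) p G"
  shows "{s. s \<subseteq> T \<and> filling Ls lam (split_at (diagram lam) p G s)} =
    (if merged_ok Ls lam p G then forced_subsets T (has_below T) (has_left T) else {})"
proof -
  have "s \<subseteq> T \<and> filling Ls lam (split_at (diagram lam) p G s) \<longleftrightarrow>
     merged_ok Ls lam p G \<and> s \<in> forced_subsets T (has_below T) (has_left T)" for s
  proof -
    have "(\<forall>i j j'. (i, j) \<in> T \<longrightarrow> (i, j') \<in> T \<longrightarrow> j < j' \<longrightarrow>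
        row_ok Ls (split_at (diagram lam) p G s (i, j)) (split_at (diagram lam) p G s (i, j'))) \<longleftrightarrow>
        (\<forall>a\<in>T. has_left T a \<longrightarrow> a \<notin> s)"
      using level_ok_yx(1)[OF t, of _ "diagram lam" G _ s] by (auto simp: has_left_def T_def)
    moreover have "(\<forall>i i' j. (i, j) \<in> T \<longrightarrow> (i', j) \<in> T \<longrightarrow> i < i' \<longrightarrow>
        col_ok Ls (split_at (diagram lam) p G s (i, j)) (split_at (diagram lam) p G s (i', j))) \<longleftrightarrow>
        (\<forall>a\<in>T. has_below T a \<longrightarrow> a \<in> s)"
      using level_ok_yx(2)[OF t, of _ "diagram lam" G _ s] by (auto simp: has_below_def T_def)
    ultimately show ?thesis
      using filling_split_iff[OF G p, of s] by (auto simp: forced_subsets_def T_def)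
  qed
  then show ?thesis by auto
qed

lemma fibre_sum:
  assumes G: "G \<in> bounded_funs (diagram lam) (length Ls - 1)"
  shows "(\<Sum>F\<in>{F. filling Ls lam F \<and> merge_at p F = G}. filling_weight Ls lam F) =
    (\<Sum>s\<in>{s. s \<subseteq> level_set (diagram lam) p G \<and> filling Ls lam (split_at (diagram lam) p G s)}.
      outer_weight Ls lam p G * (\<Prod>a\<in>level_set (diagram lam) p G.
        if a \<in> s then snd (Ls ! p) (content a) else snd (Ls ! Suc p) (content a)))"
proof -
  let ?S = "{s. s \<subseteq> level_set (diagram lam) p G \<and> filling Ls lam (split_at (diagram lam) p G s)}"
  have inj: "inj_on (split_at (diagram lam) p G) ?S"
    by (rule inj_on_subset[OF split_inj]) auto
  show ?thesis
    unfolding fibre_eq[OF G] sum.reindex[OF inj] comp_def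
    by (rule sum.cong[OF refl]) (simp add: filling_weight_split)
qed

lemma fibre_sum_xy:
  assumes G: "G \<in> bounded_funs (diagram lam) (length Ls - 1)" and p: "Suc p < length Ls"
    and letters: "Ls ! p = (True, w)" "Ls ! Suc p = (False, v)"
  defines "T \<equiv> level_set (diagram lam) p G"
  shows "(\<Sum>F\<in>{F. filling Ls lam F \<and> merge_at p F = G}. filling_weight Ls lam F) =
    (if merged_ok Ls lam p G then outer_weight Ls lam p G * (\<Prod>a\<in>T. xy_factor T w v a) else 0)"
proof (cases "merged_ok Ls lam p G")
  case True
  have "finite T" using finite_diagram by (auto simp: T_def level_set_def)
  have "(\<Sum>F\<in>{F. filling Ls lam F \<and> merge_at p F = G}. filling_weight Ls lam F) =
      (\<Sum>s\<in>forced_subsets T (has_right T) (has_above T).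
        outer_weight Ls lam p G * (\<Prod>a\<in>T. if a \<in> s then w (content a) else v (content a)))"
    using fibre_sum[OF G, where p=p] admissible_subsets_xy[OF G p] True unfolding letters snd_conv by (simp add: T_def)
  also have "\<dots> = outer_weight Ls lam p G * (\<Prod>a\<in>T. xy_factor T w v a)"
    using \<open>finite T\<close> by (simp add: sum_distrib_left[symmetric] sum_forced_subsets_prod xy_factor_def)
  finally show ?thesis using True by simp
next
  case False
  then show ?thesis using fibre_sum[OF G, where p=p] admissible_subsets_xy[OF G p] letters by (simp add: T_def)
qed

lemma fibre_sum_yx:
  assumes G: "G \<in> bounded_funs (diagram lam) (length Ls - 1)" and p: "Suc p < length Ls"
    and letters: "Ls ! p = (False, v)" "Ls ! Suc p = (True, w)"
  defines "T \<equiv> level_set (diagram lam) p G"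
  shows "(\<Sum>F\<in>{F. filling Ls lam F \<and> merge_at p F = G}. filling_weight Ls lam F) =
    (if merged_ok Ls lam p G then outer_weight Ls lam p G * (\<Prod>a\<in>T. yx_factor T v w a) else 0)"
proof (cases "merged_ok Ls lam p G")
  case True
  have "finite T" using finite_diagram by (auto simp: T_def level_set_def)
  have "(\<Sum>F\<in>{F. filling Ls lam F \<and> merge_at p F = G}. filling_weight Ls lam F) =
      (\<Sum>s\<in>forced_subsets T (has_below T) (has_left T).
        outer_weight Ls lam p G * (\<Prod>a\<in>T. if a \<in> s then v (content a) else w (content a)))"
    using fibre_sum[OF G, where p=p] admissible_subsets_yx[OF G p] True unfolding letters snd_conv by (simp add: T_def)
  also have "\<dots> = outer_weight Ls lam p G * (\<Prod>a\<in>T. yx_factor T v w a)"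
    using \<open>finite T\<close> by (simp add: sum_distrib_left[symmetric] sum_forced_subsets_prod yx_factor_def)
  finally show ?thesis using True by simp
next
  case False
  then show ?thesis using fibre_sum[OF G, where p=p] admissible_subsets_yx[OF G p] letters by (simp add: T_def)
qed

lemma level_set_between:
  assumes "a \<in> level_set D p G" "c \<in> level_set D p G" "b \<in> D"
    and "G b \<noteq> p \<Longrightarrow> lift_at p G a \<le> lift_at p G b \<and> lift_at p G b \<le> lift_at p G c"
  shows "b \<in> level_set D p G"
  using assms by (cases "G b \<le> p") (auto simp: level_set_def lift_at_def)

lemma level_set_convex:
  assumes part: "is_partition lam" and ok: "merged_ok Ls lam p G"
  shows "convex_boxes (level_set (diagram lam) p G)"
proof -
  let ?D = "diagram lam" let ?T = "level_set (diagram lam) p G"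
  have row: "lift_at p G (i, j) \<le> lift_at p G (i, j')"
    if "(i, j) \<in> ?D" "(i, j') \<in> ?D" "j < j'" "G (i, j) \<noteq> p \<or> G (i, j') \<noteq> p" for i j j'
    using ok that unfolding merged_ok_def row_ok_def by blast
  have col: "lift_at p G (i, j) \<le> lift_at p G (i', j)"
    if "(i, j) \<in> ?D" "(i', j) \<in> ?D" "i < i'" "G (i, j) \<noteq> p \<or> G (i', j) \<noteq> p" for i i' j
    using ok that unfolding merged_ok_def col_ok_def by blast
  have T: "a \<in> ?T \<longleftrightarrow> a \<in> ?D \<and> G a = p" for a by (simp add: level_set_def)
  show ?thesis unfolding convex_boxes_def
  proof (intro conjI allI impI)
    fix i j j' j'' assume h: "(i, j) \<in> ?T" "(i, j'') \<in> ?T" "j \<le> j'" "j' \<le> j''"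
    then have "(i, j') \<in> ?D" using diag_left[of i j'' lam j'] by (auto simp: T diag_mem)
    then show "(i, j') \<in> ?T"
    proof (rule level_set_between[OF h(1,2)])
      assume "G (i, j') \<noteq> p"
      moreover from this have "j < j'" "j' < j''" using h by (metis T le_neq_implies_less)+
      ultimately show "lift_at p G (i, j) \<le> lift_at p G (i, j') \<and> lift_at p G (i, j') \<le> lift_at p G (i, j'')"
        using h \<open>(i, j') \<in> ?D\<close> row by (auto simp: T)
    qed
  next
    fix i i' i'' j assume h: "(i, j) \<in> ?T" "(i'', j) \<in> ?T" "i \<le> i'" "i' \<le> i''"
    then have "(i', j) \<in> ?D" using diag_up[OF part, of i'' j i'] by (auto simp: T diag_mem)
    then show "(i', j) \<in> ?T"
    proof (rule level_set_between[OF h(1,2)])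
      assume "G (i', j) \<noteq> p"
      moreover from this have "i < i'" "i' < i''" using h by (metis T le_neq_implies_less)+
      ultimately show "lift_at p G (i, j) \<le> lift_at p G (i', j) \<and> lift_at p G (i', j) \<le> lift_at p G (i'', j)"
        using h \<open>(i', j) \<in> ?D\<close> col by (auto simp: T)
    qed
  next
    fix i j assume h: "(i + 1, j) \<in> ?T" "(i + 1, j + 1) \<in> ?T" "(i, j) \<in> ?T"
    then have "(i, j + 1) \<in> ?D" using diag_up[OF part, of "i + 1" "j + 1" i] by (auto simp: T diag_mem)
    then show "(i, j + 1) \<in> ?T"
      by (rule level_set_between[OF h(3,2)])
        (use h \<open>(i, j + 1) \<in> ?D\<close> row[of i j "j + 1"] col[of i "j + 1" "i + 1"] in \<open>auto simp: T\<close>)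
  next
    fix i j assume h: "(i, j) \<in> ?T" "(i, j + 1) \<in> ?T" "(i + 1, j + 1) \<in> ?T"
    then have "(i + 1, j) \<in> ?D" using diag_left[of "i + 1" "j + 1" lam j] by (auto simp: T diag_mem)
    then show "(i + 1, j) \<in> ?T"
      by (rule level_set_between[OF h(1,3)])
        (use h \<open>(i + 1, j) \<in> ?D\<close> col[of i j "i + 1"] row[of "i + 1" j "j + 1"] in \<open>auto simp: T\<close>)
  qed
qed

lemma lift_at_avoids: "G a \<noteq> p \<Longrightarrow> lift_at p G a \<noteq> p \<and> lift_at p G a \<noteq> Suc p"
  by (auto simp: lift_at_def)

lemma lift_at_inj: "lift_at p G a = lift_at p G b \<Longrightarrow> G a = G b"
  by (auto simp: lift_at_def split: if_splits)

lemma merged_ok_cong: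
  assumes "\<And>q. q \<noteq> p \<Longrightarrow> q \<noteq> Suc p \<Longrightarrow> Ls ! q = Ls' ! q"
  shows "merged_ok Ls lam p G = merged_ok Ls' lam p G"
proof -
  have "row_ok Ls (lift_at p G a) (lift_at p G b) = row_ok Ls' (lift_at p G a) (lift_at p G b)"
    "col_ok Ls (lift_at p G a) (lift_at p G b) = col_ok Ls' (lift_at p G a) (lift_at p G b)"
    if "\<not> (G a = p \<and> G b = p)" for a b
  proof -
    have "lift_at p G a = lift_at p G b \<Longrightarrow> Ls ! lift_at p G a = Ls' ! lift_at p G a"
      using that lift_at_inj lift_at_avoids assms by metis
    then show "row_ok Ls (lift_at p G a) (lift_at p G b) = row_ok Ls' (lift_at p G a) (lift_at p G b)"
      "col_ok Ls (lift_at p G a) (lift_at p G b) = col_ok Ls' (lift_at p G a) (lift_at p G b)"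
      by (auto simp: row_ok_def col_ok_def)
  qed
  then show ?thesis unfolding merged_ok_def by (simp cong: imp_cong)
qed

lemma outer_weight_cong:
  assumes "\<And>q. q \<noteq> p \<Longrightarrow> q \<noteq> Suc p \<Longrightarrow> Ls ! q = Ls' ! q"
  shows "outer_weight Ls lam p G = outer_weight Ls' lam p G"
  unfolding outer_weight_def using assms lift_at_avoids by (intro prod.cong) (auto simp: level_set_def)

lemma filling_sum_by_fibres:
  assumes "Suc p < length Ls"
  shows "filling_sum Ls lam = (\<Sum>G\<in>bounded_funs (diagram lam) (length Ls - 1).
    \<Sum>F\<in>{F. filling Ls lam F \<and> merge_at p F = G}. filling_weight Ls lam F)"
proof -
  have "merge_at p ` {F. filling Ls lam F} \<subseteq> bounded_funs (diagram lam) (length Ls - 1)"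
    using assms by (force simp: filling_def bounded_funs_def merge_at_def)
  from sum.group[OF finite_fillings finite_bounded_funs[OF finite_diagram] this, of "filling_weight Ls lam"]
  show ?thesis by (simp add: filling_sum_def)
qed


section \<open>The swap lemma\<close>

theorem swap_letters:
  fixes A B :: "('r::comm_ring_1) letter list" and w :: "int \<Rightarrow> 'r"
  assumes part: "is_partition lam" and w: "\<And>c. d \<le> c \<Longrightarrow> w c = x"
  shows "filling_sum (A @ [(True, w), (False, threshold d y)] @ B) lam =
    filling_sum (A @ [(False, threshold (d + 1) y), (True, \<lambda>c. w c + (if c = d then y else 0))] @ B) lam"
proof -
  define w' where "w' = (\<lambda>c. w c + (if c = d then y else 0))"
  define Ls where "Ls = A @ [(True, w), (False, threshold d y)] @ B"
  define Ls' where "Ls' = A @ [(False, threshold (d + 1) y), (True, w')] @ B"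
  define p where "p = length A"
  have len: "length Ls' = length Ls" "Suc p < length Ls" by (auto simp: Ls_def Ls'_def p_def)
  have letters: "Ls ! p = (True, w)" "Ls ! Suc p = (False, threshold d y)"
    "Ls' ! p = (False, threshold (d + 1) y)" "Ls' ! Suc p = (True, w')"
    by (auto simp: Ls_def Ls'_def p_def nth_append)
  have others: "Ls ! q = Ls' ! q" if "q \<noteq> p" "q \<noteq> Suc p" for q
  proof (cases "q < p")
    case False
    then have "q - length A \<ge> 2" using that by (auto simp: p_def)
    then obtain k where "q - length A = Suc (Suc k)" by (metis add_2_eq_Suc le_Suc_ex)
    then show ?thesis using False by (simp add: Ls_def Ls'_def p_def nth_append)
  qed (simp add: Ls_def Ls'_def p_def nth_append)
  have fibres: "(\<Sum>F\<in>{F. filling Ls lam F \<and> merge_at p F = G}. filling_weight Ls lam F) =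
      (\<Sum>F\<in>{F. filling Ls' lam F \<and> merge_at p F = G}. filling_weight Ls' lam F)"
    if G: "G \<in> bounded_funs (diagram lam) (length Ls - 1)" for G
  proof (cases "merged_ok Ls lam p G")
    case True
    let ?T = "level_set (diagram lam) p G"
    have "convex_box_set ?T"
      using level_set_convex[OF part True] finite_diagram[of lam]
      by unfold_locales (auto simp: level_set_def)
    then have "(\<Prod>a\<in>?T. xy_factor ?T w (threshold d y) a)
        = (\<Prod>a\<in>?T. yx_factor ?T (threshold (d + 1) y) w' a)"
      unfolding w'_def using convex_box_set.swap_identity w by blast
    then show ?thesis
      using fibre_sum_xy[OF G len(2) letters(1,2)] fibre_sum_yx[OF G[folded len(1)] len(2)[folded len(1)] letters(3,4)]
        merged_ok_cong[OF others] outer_weight_cong[OF others] by simp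
  next
    case False
    then show ?thesis
      using fibre_sum_xy[OF G len(2) letters(1,2)] fibre_sum_yx[OF G[folded len(1)] len(2)[folded len(1)] letters(3,4)]
        merged_ok_cong[OF others] by simp
  qed
  have "filling_sum Ls lam = (\<Sum>G\<in>bounded_funs (diagram lam) (length Ls - 1).
      \<Sum>F\<in>{F. filling Ls lam F \<and> merge_at p F = G}. filling_weight Ls lam F)"
    by (rule filling_sum_by_fibres[OF len(2)])
  also have "\<dots> = (\<Sum>G\<in>bounded_funs (diagram lam) (length Ls - 1).
      \<Sum>F\<in>{F. filling Ls' lam F \<and> merge_at p F = G}. filling_weight Ls' lam F)"
    by (rule sum.cong[OF refl fibres])
  also have "\<dots> = filling_sum Ls' lam"
    using filling_sum_by_fibres[OF len(2)[folded len(1)]] len(1) by simp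
  finally show ?thesis by (simp add: Ls_def Ls'_def w'_def)
qed


section \<open>Moving unprimed letters past primed letters\<close>

definition x_letter :: "(nat \<Rightarrow> 'r::comm_ring_1) \<Rightarrow> nat \<Rightarrow> 'r letter" where
  "x_letter x m = (True, \<lambda>c. x m)"
definition y_letter :: "(int \<Rightarrow> 'r::comm_ring_1) \<Rightarrow> int \<Rightarrow> int \<Rightarrow> 'r letter" where
  "y_letter a e k = (False, threshold (e - k) (- a k))"
definition corrected_letter :: "(nat \<Rightarrow> 'r::comm_ring_1) \<Rightarrow> (int \<Rightarrow> 'r) \<Rightarrow> int list \<Rightarrow> nat \<Rightarrow> 'r letter" where
  "corrected_letter x a ks m = (True, \<lambda>c. x m + (if int m - c \<in> set ks then - a (int m - c) else 0))"

lemma pass_primed_block: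
  fixes w :: "int \<Rightarrow> 'r::comm_ring_1"
  assumes part: "is_partition lam"
  shows "sorted_wrt (>) ks \<Longrightarrow> (\<forall>k\<in>set ks. \<forall>c\<ge>e - k. w c = x0) \<Longrightarrow>
    filling_sum (A @ [(True, w)] @ map (y_letter a e) ks @ B) lam =
    filling_sum (A @ map (y_letter a (e + 1)) ks @
      [(True, \<lambda>c. w c + (if e - c \<in> set ks then - a (e - c) else 0))] @ B) lam"
proof (induction ks arbitrary: A w)
  case Nil
  then show ?case by simp
next
  case (Cons k ks)
  define w1 where "w1 = (\<lambda>c. w c + (if c = e - k then - a k else 0))"
  have "filling_sum (A @ [(True, w)] @ map (y_letter a e) (k # ks) @ B) lam =
      filling_sum (A @ [(True, w), (False, threshold (e - k) (- a k))] @ (map (y_letter a e) ks @ B)) lam"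
    by (simp add: y_letter_def)
  also have "\<dots> = filling_sum (A @ [(False, threshold (e - k + 1) (- a k)), (True, w1)] @
      (map (y_letter a e) ks @ B)) lam"
    unfolding w1_def by (rule swap_letters[OF part, where x=x0]) (use Cons.prems in auto)
  also have "\<dots> = filling_sum ((A @ [y_letter a (e + 1) k]) @ [(True, w1)] @ map (y_letter a e) ks @ B) lam"
    by (simp add: y_letter_def algebra_simps)
  also have "\<dots> = filling_sum ((A @ [y_letter a (e + 1) k]) @ map (y_letter a (e + 1)) ks @
      [(True, \<lambda>c. w1 c + (if e - c \<in> set ks then - a (e - c) else 0))] @ B) lam"
  proof (rule Cons.IH)
    show "sorted_wrt (>) ks" using Cons.prems by simp
    show "\<forall>k'\<in>set ks. \<forall>c\<ge>e - k'. w1 c = x0"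
    proof (intro ballI allI impI)
      fix k' c assume "k' \<in> set ks" "e - k' \<le> c"
      moreover have "k' < k" using Cons.prems(1) \<open>k' \<in> set ks\<close> by simp
      ultimately show "w1 c = x0" using Cons.prems(2) \<open>k' \<in> set ks\<close> by (auto simp: w1_def)
    qed
  qed
  also have "(\<lambda>c. w1 c + (if e - c \<in> set ks then - a (e - c) else 0)) =
      (\<lambda>c. w c + (if e - c \<in> set (k # ks) then - a (e - c) else 0))"
    using Cons.prems(1) by (auto simp: w1_def fun_eq_iff)
  finally show ?case by simp
qed

lemma pass_unprimed_letters:
  assumes part: "is_partition lam" and ks: "sorted_wrt (>) ks"
  shows "m \<le> n \<Longrightarrow> filling_sum (map (x_letter x) (rev [1..<n+1]) @ map (y_letter a 1) ks) lam =
    filling_sum (map (x_letter x) (rev [m+1..<n+1]) @ map (y_letter a (int m + 1)) ks @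
      map (corrected_letter x a ks) (rev [1..<m+1])) lam"
proof (induction m)
  case 0
  then show ?case by simp
next
  case (Suc m)
  let ?X = "\<lambda>l. map (x_letter x) (rev [l..<n+1])" and ?Y = "\<lambda>e. map (y_letter a e) ks"
    and ?C = "\<lambda>l. map (corrected_letter x a ks) (rev [1..<l])"
  have "rev [m+1..<n+1] = rev [m+2..<n+1] @ [m+1]" using Suc.prems by (simp add: upt_rec)
  then have "filling_sum (?X (m+1) @ ?Y (int m + 1) @ ?C (m+1)) lam
      = filling_sum (?X (m+2) @ [(True, \<lambda>c. x (m+1))] @ ?Y (int (m+1)) @ ?C (m+1)) lam"
    by (simp add: x_letter_def add.commute del: upt_Suc)
  also have "\<dots> = filling_sum (?X (m+2) @ ?Y (int (m+1) + 1) @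
      [(True, \<lambda>c. x (m+1) + (if int (m+1) - c \<in> set ks then - a (int (m+1) - c) else 0))] @ ?C (m+1)) lam"
    by (rule pass_primed_block[OF part ks]) auto
  also have "\<dots> = filling_sum (?X (Suc m + 1) @ ?Y (int (Suc m) + 1) @ ?C (Suc m + 1)) lam"
    by (simp add: corrected_letter_def cong: if_cong)
  finally show ?case using Suc by simp
qed

definition shift_on :: "nat \<Rightarrow> (nat \<times> nat) set \<Rightarrow> (nat \<times> nat \<Rightarrow> nat) \<Rightarrow> nat \<times> nat \<Rightarrow> nat" where
  "shift_on k D G = (\<lambda>a. if a \<in> D then G a + k else 0)"

lemma row_ok_shift: "row_ok (P @ Q) (u + length P) (v + length P) = row_ok Q u v"
  by (simp add: row_ok_def nth_append)
lemma col_ok_shift: "col_ok (P @ Q) (u + length P) (v + length P) = col_ok Q u v"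
  by (simp add: col_ok_def nth_append)

lemma filling_shift_iff:
  assumes "\<forall>a. a \<notin> diagram lam \<longrightarrow> G a = 0"
  shows "filling (P @ Q) lam (shift_on (length P) (diagram lam) G) \<longleftrightarrow> filling Q lam G"
  using assms unfolding filling_def shift_on_def by (auto simp: row_ok_shift col_ok_shift)

lemma filling_sum_empty_diagram:
  assumes "diagram lam = {}"
  shows "filling_sum Ls lam = 1"
proof -
  have "{F. filling Ls lam F} = {\<lambda>_. 0}" using assms by (auto simp: filling_def)
  then show ?thesis using assms by (simp add: filling_sum_def filling_weight_def)
qed

lemma shift_on_inj: "inj_on (shift_on k (diagram lam)) {G. filling Q lam G}"
proof (rule inj_onI, rule ext)
  fix G G' a assume "G \<in> {G. filling Q lam G}" "G' \<in> {G. filling Q lam G}"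
    and eq: "shift_on k (diagram lam) G = shift_on k (diagram lam) G'"
  then have bnd: "G \<in> bounded_funs (diagram lam) (length Q)" "G' \<in> bounded_funs (diagram lam) (length Q)"
    using filling_bounded by auto
  show "G a = G' a"
  proof (cases "a \<in> diagram lam")
    case True
    then show ?thesis using fun_cong[OF eq, of a] by (simp add: shift_on_def)
  next
    case False
    then show ?thesis using bnd unfolding bounded_funs_def mem_Collect_eq by metis
  qed
qed

text \<open>Since the box \<open>(1, 1)\<close> carries the minimal position, the fillings by \<open>P @ Q\<close> that
  avoid \<open>P\<close> there avoid it everywhere, and are the shifted fillings by \<open>Q\<close>.\<close>

lemma fillings_avoiding_prefix:
  assumes part: "is_partition lam" and corner: "(1, 1) \<in> diagram lam"
  shows "{F. filling (P @ Q) lam F \<and> length P \<le> F (1, 1)} = shift_on (length P) (diagram lam) ` {G. filling Q lam G}"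
    (is "?avoiding = ?sh ` _")
proof (intro set_eqI iffI)
  let ?D = "diagram lam" let ?k = "length P"
  fix F assume F: "F \<in> ?avoiding"
  then have vF: "filling (P @ Q) lam F" by simp
  define G where "G = (\<lambda>a. if a \<in> ?D then F a - ?k else 0)"
  have "?k \<le> F a" if "a \<in> ?D" for a
    using filling_corner_min[OF part vF, of "fst a" "snd a"] that F by auto
  moreover have "F a = 0" if "a \<notin> ?D" for a using vF that unfolding filling_def by blast
  ultimately have "F = ?sh G" by (auto simp: shift_on_def G_def fun_eq_iff)
  moreover have "filling Q lam G"
    using vF filling_shift_iff[of lam G P Q] \<open>F = ?sh G\<close> by (simp add: G_def)
  ultimately show "F \<in> ?sh ` {G. filling Q lam G}" by blast
next
  fix F assume "F \<in> ?sh ` {G. filling Q lam G}"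
  then obtain G where G: "filling Q lam G" "F = ?sh G" by auto
  then show "F \<in> ?avoiding"
    using filling_shift_iff[of lam G P Q] corner by (auto simp: filling_def shift_on_def)
qed

text \<open>If every letter of \<open>P\<close> has weight \<open>0\<close> at content \<open>0\<close>, fillings using \<open>P\<close> at the
  box \<open>(1, 1)\<close> contribute nothing, and the others correspond to fillings by \<open>Q\<close>.\<close>

lemma filling_sum_drop_prefix:
  fixes P Q :: "('r::comm_ring_1) letter list"
  assumes part: "is_partition lam" and P: "\<forall>L\<in>set P. snd L 0 = 0"
  shows "filling_sum (P @ Q) lam = filling_sum Q lam"
proof (cases "diagram lam = {}")
  case True
  then show ?thesis by (simp add: filling_sum_empty_diagram)
next
  case False
  let ?D = "diagram lam" let ?k = "length P" let ?sh = "shift_on ?k ?D"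
  define V where "V = {F. filling (P @ Q) lam F}"
  have corner: "(1, 1) \<in> ?D" using False diag_corner[OF part] by auto
  have vanish: "(\<Sum>F\<in>{F\<in>V. F (1, 1) < ?k}. filling_weight (P @ Q) lam F) = 0"
  proof (rule sum.neutral, rule ballI)
    fix F assume "F \<in> {F\<in>V. F (1, 1) < ?k}"
    then have "snd ((P @ Q) ! F (1, 1)) (content (1, 1)) = 0"
      using P by (simp add: nth_append content_def)
    then show "filling_weight (P @ Q) lam F = 0"
      unfolding filling_weight_def using corner by (intro prod_zero finite_diagram) auto
  qed
  have avoiding: "{F\<in>V. ?k \<le> F (1, 1)} = ?sh ` {G. filling Q lam G}"
    using fillings_avoiding_prefix[OF part corner, of P Q] by (simp add: V_def)
  have weight: "filling_weight (P @ Q) lam (?sh G) = filling_weight Q lam G" for G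
    unfolding filling_weight_def by (rule prod.cong) (auto simp: shift_on_def nth_append)
  have "filling_sum (P @ Q) lam = (\<Sum>F\<in>{F\<in>V. F (1, 1) < ?k}. filling_weight (P @ Q) lam F)
      + (\<Sum>F\<in>{F\<in>V. ?k \<le> F (1, 1)}. filling_weight (P @ Q) lam F)"
  proof -
    have "V = {F\<in>V. F (1, 1) < ?k} \<union> {F\<in>V. ?k \<le> F (1, 1)}" by auto
    moreover have "finite V" using finite_fillings by (simp add: V_def)
    ultimately show ?thesis
      unfolding filling_sum_def V_def[symmetric] by (metis (no_types, lifting) sum.union_disjoint
        disjoint_iff finite_Un leD mem_Collect_eq)
  qed
  also have "\<dots> = filling_sum Q lam"
    unfolding vanish avoiding sum.reindex[OF shift_on_inj] comp_def weight by (simp add: filling_sum_def)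
  finally show ?thesis .
qed

section \<open>The double Schur polynomial as a filling sum\<close>

text \<open>The indices \<open>n, n - 1, ..., -|lam|\<close> of the primed letters; every value \<open>T \<alpha> - c \<alpha>\<close>
  of a reverse tableau lies in this range.\<close>

definition prime_range :: "nat \<Rightarrow> nat list \<Rightarrow> int list" where
  "prime_range n lam = map (\<lambda>r. int n - int r) [0..<n + sum_list lam + 1]"

lemma prime_range_set: "k \<in> set (prime_range n lam) \<longleftrightarrow> - int (sum_list lam) \<le> k \<and> k \<le> int n"
proof
  assume "k \<in> set (prime_range n lam)"
  then show "- int (sum_list lam) \<le> k \<and> k \<le> int n" by (auto simp: prime_range_def)
next
  assume h: "- int (sum_list lam) \<le> k \<and> k \<le> int n"
  then have "nat (int n - k) < n + sum_list lam + 1" "k = int n - int (nat (int n - k))" by auto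
  then show "k \<in> set (prime_range n lam)"
    unfolding prime_range_def set_map set_upt by (auto intro!: image_eqI[of _ _ "nat (int n - k)"])
qed

lemma prime_range_sorted: "sorted_wrt (>) (prime_range n lam)"
  unfolding prime_range_def sorted_wrt_map
  by (rule sorted_wrt_mono_rel[OF _ sorted_wrt_upt]) auto

lemma prime_range_nth: "r < n + sum_list lam + 1 \<Longrightarrow> prime_range n lam ! r = int n - int r"
  unfolding prime_range_def by (simp del: upt_Suc)

lemma prime_range_length: "length (prime_range n lam) = n + sum_list lam + 1"
  unfolding prime_range_def by (simp del: upt_Suc)

lemma rev_upt_nth: "q < n \<Longrightarrow> rev [1..<n+1] ! q = n - q"
  by (simp add: rev_nth del: upt_Suc)

text \<open>Entries strictly decrease down the columns of a reverse tableau, starting from at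
  most \<open>n\<close> in the first row.\<close>

lemma reverse_tableau_bound:
  assumes part: "is_partition lam" and T: "reverse_tableau n lam T"
  shows "(i, j) \<in> diagram lam \<Longrightarrow> T (i, j) + i \<le> n + 1"
proof (induction i)
  case 0
  then show ?case by (simp add: diag_mem)
next
  case (Suc i)
  show ?case
  proof (cases "i = 0")
    case True
    then show ?thesis using T Suc.prems unfolding reverse_tableau_def by auto
  next
    case False
    have d: "(i, j) \<in> diagram lam" using diag_up[OF part Suc.prems] False by simp
    have "T (Suc i, j) < T (i, j)" using T Suc.prems d unfolding reverse_tableau_def by auto
    then show ?thesis using Suc.IH[OF d] by simp
  qed
qed

text \<open>Reverse tableaux with entries in \<open>1..n\<close> correspond to fillings by a word of \<open>n\<close>
  unprimed letters via \<open>T \<mapsto> n - T\<close>: reversing the order turns the reverse tableau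
  conditions into the filling conditions.\<close>

definition complement_on :: "nat \<Rightarrow> (nat \<times> nat) set \<Rightarrow> (nat \<times> nat \<Rightarrow> nat) \<Rightarrow> nat \<times> nat \<Rightarrow> nat" where
  "complement_on n D T = (\<lambda>a. if a \<in> D then n - T a else 0)"

lemma filling_of_reverse_tableau:
  assumes len: "length Ls = n" and unprimed: "\<forall>q<n. fst (Ls ! q)"
    and T: "reverse_tableau n lam T"
  shows "filling Ls lam (complement_on n (diagram lam) T)"
proof -
  have r: "\<alpha> \<in> diagram lam \<Longrightarrow> 1 \<le> T \<alpha> \<and> T \<alpha> \<le> n" for \<alpha>
    using T unfolding reverse_tableau_def by blast
  show ?thesis
    unfolding filling_def
  proof (intro conjI allI impI ballI)
    fix i j j' assume h: "(i, j) \<in> diagram lam" "(i, j') \<in> diagram lam" "j < j'"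
    then have "T (i, j') \<le> T (i, j)" using T unfolding reverse_tableau_def by blast
    then show "row_ok Ls (complement_on n (diagram lam) T (i, j)) (complement_on n (diagram lam) T (i, j'))"
      using h r[of "(i, j)"] r[of "(i, j')"] unprimed by (auto simp: row_ok_def complement_on_def)
  next
    fix i i' j assume h: "(i, j) \<in> diagram lam" "(i', j) \<in> diagram lam" "i < i'"
    then have "T (i', j) < T (i, j)" using T unfolding reverse_tableau_def by blast
    then show "col_ok Ls (complement_on n (diagram lam) T (i, j)) (complement_on n (diagram lam) T (i', j))"
      using h r[of "(i, j)"] r[of "(i', j)"] by (auto simp: col_ok_def complement_on_def)
  qed (use len in \<open>auto simp: complement_on_def dest: r\<close>)
qed

lemma reverse_tableau_of_filling:
  assumes len: "length Ls = n" and unprimed: "\<forall>q<n. fst (Ls ! q)"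
    and F: "filling Ls lam F"
  shows "reverse_tableau n lam (complement_on n (diagram lam) F)"
proof -
  have r: "\<alpha> \<in> diagram lam \<Longrightarrow> F \<alpha> < n" for \<alpha>
    using F len unfolding filling_def by blast
  show ?thesis
    unfolding reverse_tableau_def
  proof (intro conjI allI impI ballI)
    fix i j j' assume h: "(i, j) \<in> diagram lam" "(i, j') \<in> diagram lam" "j < j'"
    then have "row_ok Ls (F (i, j)) (F (i, j'))" using F unfolding filling_def by blast
    then show "complement_on n (diagram lam) F (i, j') \<le> complement_on n (diagram lam) F (i, j)"
      using h by (auto simp: row_ok_def complement_on_def)
  next
    fix i i' j assume h: "(i, j) \<in> diagram lam" "(i', j) \<in> diagram lam" "i < i'"
    then have "col_ok Ls (F (i, j)) (F (i', j))" using F unfolding filling_def by blast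
    then have "F (i, j) < F (i', j)" using unprimed r h by (auto simp: col_ok_def)
    then show "complement_on n (diagram lam) F (i', j) < complement_on n (diagram lam) F (i, j)"
      using h r[of "(i', j)"] by (auto simp: complement_on_def)
  qed (auto simp: complement_on_def dest: r)
qed

lemma complement_on_involution:
  assumes "\<forall>a. a \<notin> D \<longrightarrow> T a = 0" "\<forall>a\<in>D. T a \<le> n"
  shows "complement_on n D (complement_on n D T) = T"
  using assms by (auto simp: complement_on_def fun_eq_iff)

theorem double_schur_filling_sum:
  fixes x :: "nat \<Rightarrow> 'r::comm_ring_1" and a :: "int \<Rightarrow> 'r"
  assumes part: "is_partition lam"
  shows "double_schur n lam x a = filling_sum (map (corrected_letter x a (prime_range n lam)) (rev [1..<n+1])) lam"
proof -
  let ?D = "diagram lam" let ?c = "complement_on n (diagram lam)"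
  define Ls where "Ls = map (corrected_letter x a (prime_range n lam)) (rev [1..<n+1])"
  have len: "length Ls = n" by (simp add: Ls_def)
  have nth: "q < n \<Longrightarrow> Ls ! q = corrected_letter x a (prime_range n lam) (n - q)" for q
    unfolding Ls_def using rev_upt_nth[of q n] by (simp del: upt_Suc)
  have unprimed: "\<forall>q<n. fst (Ls ! q)" by (simp add: nth corrected_letter_def)
  have "(\<Sum>T\<in>{T. reverse_tableau n lam T}. \<Prod>\<alpha>\<in>?D. x (T \<alpha>) - a (int (T \<alpha>) - content \<alpha>)) =
        (\<Sum>F\<in>{F. filling Ls lam F}. filling_weight Ls lam F)"
  proof (rule sum.reindex_bij_witness[where i = ?c and j = ?c])
    fix T assume "T \<in> {T. reverse_tableau n lam T}"
    then have T: "reverse_tableau n lam T" by simp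
    have r: "\<alpha> \<in> ?D \<Longrightarrow> 1 \<le> T \<alpha> \<and> T \<alpha> \<le> n" for \<alpha>
      using T unfolding reverse_tableau_def by blast
    show "?c (?c T) = T" using T by (intro complement_on_involution) (auto simp: reverse_tableau_def)
    show "?c T \<in> {F. filling Ls lam F}" using filling_of_reverse_tableau[OF len unprimed T] by simp
    show "filling_weight Ls lam (?c T) = (\<Prod>\<alpha>\<in>?D. x (T \<alpha>) - a (int (T \<alpha>) - content \<alpha>))"
      unfolding filling_weight_def
    proof (rule prod.cong[OF refl])
      fix \<alpha> assume \<alpha>: "\<alpha> \<in> ?D"
      obtain i j where ij: "\<alpha> = (i, j)" by (cases \<alpha>)
      have "T (i, j) + i \<le> n + 1" using reverse_tableau_bound[OF part T] \<alpha> ij by simp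
      moreover have "j \<le> sum_list lam" "1 \<le> i" "1 \<le> j" using \<alpha> ij col_le_size by (auto simp: diag_mem)
      ultimately have "int (T \<alpha>) - content \<alpha> \<in> set (prime_range n lam)"
        unfolding prime_range_set using r[OF \<alpha>] ij by (simp add: content_def)
      moreover have "?c T \<alpha> < n" "n - ?c T \<alpha> = T \<alpha>" using r[OF \<alpha>] \<alpha> by (auto simp: complement_on_def)
      ultimately show "snd (Ls ! ?c T \<alpha>) (content \<alpha>) = x (T \<alpha>) - a (int (T \<alpha>) - content \<alpha>)"
        by (simp add: nth corrected_letter_def)
    qed
  next
    fix F assume "F \<in> {F. filling Ls lam F}"
    then have F: "filling Ls lam F" by simp
    show "?c (?c F) = F" using F len by (intro complement_on_involution) (auto simp: filling_def)
    show "?c F \<in> {T. reverse_tableau n lam T}" using reverse_tableau_of_filling[OF len unprimed F] by simp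
  qed
  then show ?thesis by (simp add: double_schur_def filling_sum_def Ls_def)
qed


section \<open>Reverse supertableaux as fillings\<close>

fun row_sym_ok :: "sym \<Rightarrow> sym \<Rightarrow> bool" where
  "row_sym_ok (Unpr k) (Unpr k') = (k' \<le> k)"
| "row_sym_ok (Unpr k) (Pr k') = True"
| "row_sym_ok (Pr k) (Unpr k') = False"
| "row_sym_ok (Pr k) (Pr k') = (k' < k)"

fun col_sym_ok :: "sym \<Rightarrow> sym \<Rightarrow> bool" where
  "col_sym_ok (Unpr k) (Unpr k') = (k' < k)"
| "col_sym_ok (Unpr k) (Pr k') = True"
| "col_sym_ok (Pr k) (Unpr k') = False"
| "col_sym_ok (Pr k) (Pr k') = (k' \<le> k)"

lemma row_conditions_iff:
  fixes D :: "(nat \<times> nat) set"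
  shows "(\<forall>i j j' k k'. (i, j) \<in> D \<longrightarrow> (i, j') \<in> D \<longrightarrow> T (i, j) = Pr k \<longrightarrow> T (i, j') = Unpr k' \<longrightarrow> j' < j) \<and>
   (\<forall>i j j' k k'. (i, j) \<in> D \<longrightarrow> (i, j') \<in> D \<longrightarrow> j < j' \<longrightarrow> T (i, j) = Unpr k \<longrightarrow> T (i, j') = Unpr k' \<longrightarrow> k' \<le> k) \<and>
   (\<forall>i j j' k k'. (i, j) \<in> D \<longrightarrow> (i, j') \<in> D \<longrightarrow> j < j' \<longrightarrow> T (i, j) = Pr k \<longrightarrow> T (i, j') = Pr k' \<longrightarrow> k' < k)
   \<longleftrightarrow> (\<forall>i j j'. (i, j) \<in> D \<longrightarrow> (i, j') \<in> D \<longrightarrow> j < j' \<longrightarrow> row_sym_ok (T (i, j)) (T (i, j')))"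
  (is "?L \<longleftrightarrow> ?R")
proof
  assume L: ?L
  note PU = L[THEN conjunct1, rule_format]
    and UU = L[THEN conjunct2, THEN conjunct1, rule_format]
    and PP = L[THEN conjunct2, THEN conjunct2, rule_format]
  show ?R
  proof (intro allI impI)
    fix i j j' assume h: "(i, j) \<in> D" "(i, j') \<in> D" "j < j'"
    show "row_sym_ok (T (i, j)) (T (i, j'))"
    proof (cases "T (i, j)"; cases "T (i, j')")
      fix k k' assume "T (i, j) = Pr k" "T (i, j') = Unpr k'"
      then have "j' < j" by (rule PU[OF h(1,2)])
      then show ?thesis using h(3) by simp
    qed (use UU[OF h] PP[OF h] in auto)
  qed
next
  assume R: ?R
  show ?L
  proof (intro conjI allI impI)
    fix i j j' k k' assume h: "(i, j) \<in> D" "(i, j') \<in> D" "T (i, j) = Pr k" "T (i, j') = Unpr k'"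
    show "j' < j"
      using R[rule_format, of i j j'] h by (cases "j < j'"; cases "j = j'") auto
  next
    fix i j j' k k' assume h: "(i, j) \<in> D" "(i, j') \<in> D" "j < j'" "T (i, j) = Unpr k" "T (i, j') = Unpr k'"
    show "k' \<le> k" using R[rule_format, OF h(1-3)] h(4,5) by simp
  next
    fix i j j' k k' assume h: "(i, j) \<in> D" "(i, j') \<in> D" "j < j'" "T (i, j) = Pr k" "T (i, j') = Pr k'"
    show "k' < k" using R[rule_format, OF h(1-3)] h(4,5) by simp
  qed
qed

lemma col_conditions_iff:
  fixes D :: "(nat \<times> nat) set"
  shows "(\<forall>i i' j k k'. (i, j) \<in> D \<longrightarrow> (i', j) \<in> D \<longrightarrow> T (i, j) = Pr k \<longrightarrow> T (i', j) = Unpr k' \<longrightarrow> i' < i) \<and>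
   (\<forall>i i' j k k'. (i, j) \<in> D \<longrightarrow> (i', j) \<in> D \<longrightarrow> i < i' \<longrightarrow> T (i, j) = Unpr k \<longrightarrow> T (i', j) = Unpr k' \<longrightarrow> k' < k) \<and>
   (\<forall>i i' j k k'. (i, j) \<in> D \<longrightarrow> (i', j) \<in> D \<longrightarrow> i < i' \<longrightarrow> T (i, j) = Pr k \<longrightarrow> T (i', j) = Pr k' \<longrightarrow> k' \<le> k)
   \<longleftrightarrow> (\<forall>i i' j. (i, j) \<in> D \<longrightarrow> (i', j) \<in> D \<longrightarrow> i < i' \<longrightarrow> col_sym_ok (T (i, j)) (T (i', j)))"
  (is "?L \<longleftrightarrow> ?R")
proof
  assume L: ?L
  note PU = L[THEN conjunct1, rule_format]
    and UU = L[THEN conjunct2, THEN conjunct1, rule_format]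
    and PP = L[THEN conjunct2, THEN conjunct2, rule_format]
  show ?R
  proof (intro allI impI)
    fix i i' j assume h: "(i, j) \<in> D" "(i', j) \<in> D" "i < i'"
    show "col_sym_ok (T (i, j)) (T (i', j))"
    proof (cases "T (i, j)"; cases "T (i', j)")
      fix k k' assume "T (i, j) = Pr k" "T (i', j) = Unpr k'"
      then have "i' < i" by (rule PU[OF h(1,2)])
      then show ?thesis using h(3) by simp
    qed (use UU[OF h] PP[OF h] in auto)
  qed
next
  assume R: ?R
  show ?L
  proof (intro conjI allI impI)
    fix i i' j k k' assume h: "(i, j) \<in> D" "(i', j) \<in> D" "T (i, j) = Pr k" "T (i', j) = Unpr k'"
    show "i' < i"
      using R[rule_format, of i j i'] h by (cases "i < i'"; cases "i = i'") auto
  next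
    fix i i' j k k' assume h: "(i, j) \<in> D" "(i', j) \<in> D" "i < i'" "T (i, j) = Unpr k" "T (i', j) = Unpr k'"
    show "k' < k" using R[rule_format, OF h(1-3)] h(4,5) by simp
  next
    fix i i' j k k' assume h: "(i, j) \<in> D" "(i', j) \<in> D" "i < i'" "T (i, j) = Pr k" "T (i', j) = Pr k'"
    show "k' \<le> k" using R[rule_format, OF h(1-3)] h(4,5) by simp
  qed
qed

lemma reverse_supertableau_iff:
  "reverse_supertableau n lam T \<longleftrightarrow>
     (\<forall>\<alpha>. \<alpha> \<notin> diagram lam \<longrightarrow> T \<alpha> = Unpr 0) \<and>
     (\<forall>\<alpha>\<in>diagram lam. \<forall>k. T \<alpha> = Unpr k \<longrightarrow> 1 \<le> k \<and> k \<le> n) \<and>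
     (\<forall>\<alpha>\<in>diagram lam. \<forall>k. T \<alpha> = Pr k \<longrightarrow> k \<le> int n) \<and>
     (\<forall>i j j'. (i, j) \<in> diagram lam \<longrightarrow> (i, j') \<in> diagram lam \<longrightarrow> j < j' \<longrightarrow> row_sym_ok (T (i, j)) (T (i, j'))) \<and>
     (\<forall>i i' j. (i, j) \<in> diagram lam \<longrightarrow> (i', j) \<in> diagram lam \<longrightarrow> i < i' \<longrightarrow> col_sym_ok (T (i, j)) (T (i', j))) \<and>
     (\<forall>i j k. (i, j) \<in> diagram lam \<longrightarrow> T (i, j) = Pr k \<longrightarrow> int (col_len lam j) - int j + 1 \<le> k)"
  unfolding reverse_supertableau_def row_conditions_iff[symmetric] col_conditions_iff[symmetric]
  by (simp only: conj_ac)

text \<open>The word encoding reverse supertableaux: the unprimed letters \<open>x_n, ..., x_1\<close>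
  followed by the primed letters \<open>-a_k\<close> for \<open>k = n, n - 1, ..., -|lam|\<close>, the latter
  restricted to contents \<open>\<ge> 1 - k\<close>.\<close>

definition super_word :: "nat \<Rightarrow> nat list \<Rightarrow> (nat \<Rightarrow> 'r::comm_ring_1) \<Rightarrow> (int \<Rightarrow> 'r) \<Rightarrow> 'r letter list" where
  "super_word n lam x a = map (x_letter x) (rev [1..<n+1]) @ map (y_letter a 1) (prime_range n lam)"

definition sym_pos :: "nat \<Rightarrow> sym \<Rightarrow> nat" where
  "sym_pos n s = (case s of Unpr k \<Rightarrow> n - k | Pr k \<Rightarrow> n + nat (int n - k))"

definition pos_sym :: "nat \<Rightarrow> nat \<Rightarrow> sym" where
  "pos_sym n q = (if q < n then Unpr (n - q) else Pr (int n - int (q - n)))"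

definition sym_in_range :: "nat \<Rightarrow> nat list \<Rightarrow> sym \<Rightarrow> bool" where
  "sym_in_range n lam s =
     (case s of Unpr k \<Rightarrow> 1 \<le> k \<and> k \<le> n | Pr k \<Rightarrow> - int (sum_list lam) \<le> k \<and> k \<le> int n)"

lemma super_word_length: "length (super_word n lam x a) = n + (n + sum_list lam + 1)"
  by (simp add: super_word_def prime_range_length del: upt_Suc)

lemma super_word_sym_pos:
  assumes "sym_in_range n lam s"
  shows "sym_pos n s < length (super_word n lam x a)"
    and "super_word n lam x a ! sym_pos n s = (case s of Unpr k \<Rightarrow> x_letter x k | Pr k \<Rightarrow> y_letter a 1 k)"
proof -
  show "sym_pos n s < length (super_word n lam x a)"
    using assms by (cases s) (auto simp: sym_pos_def sym_in_range_def super_word_length)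
  show "super_word n lam x a ! sym_pos n s = (case s of Unpr k \<Rightarrow> x_letter x k | Pr k \<Rightarrow> y_letter a 1 k)"
  proof (cases s)
    case (Unpr k)
    then have "n - k < n" "rev [1..<n+1] ! (n - k) = k" using assms rev_upt_nth[of "n - k" n]
      by (auto simp: sym_in_range_def)
    then show ?thesis using Unpr by (simp add: super_word_def sym_pos_def nth_append del: upt_Suc)
  next
    case (Pr k)
    then have "nat (int n - k) < n + sum_list lam + 1" "prime_range n lam ! nat (int n - k) = k"
      using assms prime_range_nth[of "nat (int n - k)" n lam] by (auto simp: sym_in_range_def)
    then show ?thesis
      using Pr by (simp add: super_word_def sym_pos_def nth_append prime_range_length del: upt_Suc)
  qed
qed

lemma pos_sym_inverse:
  assumes "q < length (super_word n lam x a)"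
  shows "sym_in_range n lam (pos_sym n q)" "sym_pos n (pos_sym n q) = q"
  using assms by (auto simp: pos_sym_def sym_pos_def sym_in_range_def super_word_length)

lemma sym_pos_inverse: "sym_in_range n lam s \<Longrightarrow> pos_sym n (sym_pos n s) = s"
  by (cases s) (auto simp: pos_sym_def sym_pos_def sym_in_range_def)

lemma row_ok_sym_pos:
  assumes "sym_in_range n lam s" "sym_in_range n lam t"
  shows "row_ok (super_word n lam x a) (sym_pos n s) (sym_pos n t) \<longleftrightarrow> row_sym_ok s t"
  using assms super_word_sym_pos(2)[OF assms(1), of x a] super_word_sym_pos(2)[OF assms(2), of x a]
  by (cases s; cases t) (auto simp: row_ok_def sym_pos_def sym_in_range_def x_letter_def y_letter_def)

lemma col_ok_sym_pos:
  assumes "sym_in_range n lam s" "sym_in_range n lam t"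
  shows "col_ok (super_word n lam x a) (sym_pos n s) (sym_pos n t) \<longleftrightarrow> col_sym_ok s t"
  using assms super_word_sym_pos(2)[OF assms(1), of x a] super_word_sym_pos(2)[OF assms(2), of x a]
  by (cases s; cases t) (auto simp: col_ok_def sym_pos_def sym_in_range_def x_letter_def y_letter_def)

definition admissible_at :: "sym \<Rightarrow> int \<Rightarrow> bool" where
  "admissible_at s c \<longleftrightarrow> (\<forall>k. s = Pr k \<longrightarrow> 1 - k \<le> c)"

lemma weight_sym_pos:
  assumes "sym_in_range n lam s"
  shows "snd (super_word n lam x a ! sym_pos n s) c = (if admissible_at s c then sym_weight x a s else 0)"
  using super_word_sym_pos(2)[OF assms, of x a]
  by (cases s) (auto simp: admissible_at_def sym_weight_def x_letter_def y_letter_def threshold_def)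

text \<open>For a partition whose primed entries weakly decrease down columns, the flag condition
  \<open>k \<ge> col_len j - j + 1\<close> on primed entries \<open>k'\<close> in column \<open>j\<close> is equivalent to
  admissibility in every box: the bottom box of the column is the binding one.\<close>

lemma flag_iff_admissible:
  assumes part: "is_partition lam"
    and cols: "\<forall>i i' j. (i, j) \<in> diagram lam \<longrightarrow> (i', j) \<in> diagram lam \<longrightarrow> i < i' \<longrightarrow> col_sym_ok (T (i, j)) (T (i', j))"
  shows "(\<forall>i j k. (i, j) \<in> diagram lam \<longrightarrow> T (i, j) = Pr k \<longrightarrow> int (col_len lam j) - int j + 1 \<le> k)
     \<longleftrightarrow> (\<forall>\<alpha>\<in>diagram lam. admissible_at (T \<alpha>) (content \<alpha>))"
proof (intro iffI ballI)
  fix \<alpha> assume flag: "\<forall>i j k. (i, j) \<in> diagram lam \<longrightarrow> T (i, j) = Pr k \<longrightarrow> int (col_len lam j) - int j + 1 \<le> k"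
    and \<alpha>: "\<alpha> \<in> diagram lam"
  obtain i j where ij: "\<alpha> = (i, j)" by (cases \<alpha>)
  have i: "i \<le> col_len lam j" using col_len_bottom[OF part] \<alpha> ij by simp
  show "admissible_at (T \<alpha>) (content \<alpha>)"
    unfolding admissible_at_def
  proof (intro allI impI)
    fix k assume "T \<alpha> = Pr k"
    then have "int (col_len lam j) - int j + 1 \<le> k" using flag \<alpha> ij by blast
    then show "1 - k \<le> content \<alpha>" using i ij by (simp add: content_def)
  qed
next
  assume adm: "\<forall>\<alpha>\<in>diagram lam. admissible_at (T \<alpha>) (content \<alpha>)"
  show "\<forall>i j k. (i, j) \<in> diagram lam \<longrightarrow> T (i, j) = Pr k \<longrightarrow> int (col_len lam j) - int j + 1 \<le> k"
  proof (intro allI impI)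
    fix i j k assume h: "(i, j) \<in> diagram lam" "T (i, j) = Pr k"
    define L where "L = col_len lam j"
    have L: "i \<le> L" "(L, j) \<in> diagram lam" using col_len_bottom[OF part h(1)] by (auto simp: L_def)
    obtain k' where k': "T (L, j) = Pr k'" "k' \<le> k"
    proof (cases "i = L")
      case False
      then have "col_sym_ok (Pr k) (T (L, j))" using cols h L by force
      then show ?thesis using that by (cases "T (L, j)") auto
    qed (use h in auto)
    then show "int (col_len lam j) - int j + 1 \<le> k"
      using adm L(2) by (auto simp: admissible_at_def content_def L_def)
  qed
qed

lemma reverse_supertableau_iff_admissible:
  assumes part: "is_partition lam"
  shows "reverse_supertableau n lam T \<longleftrightarrow>
     (\<forall>\<alpha>. \<alpha> \<notin> diagram lam \<longrightarrow> T \<alpha> = Unpr 0) \<and> (\<forall>\<alpha>\<in>diagram lam. sym_in_range n lam (T \<alpha>)) \<and>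
     (\<forall>i j j'. (i, j) \<in> diagram lam \<longrightarrow> (i, j') \<in> diagram lam \<longrightarrow> j < j' \<longrightarrow> row_sym_ok (T (i, j)) (T (i, j'))) \<and>
     (\<forall>i i' j. (i, j) \<in> diagram lam \<longrightarrow> (i', j) \<in> diagram lam \<longrightarrow> i < i' \<longrightarrow> col_sym_ok (T (i, j)) (T (i', j))) \<and>
     (\<forall>\<alpha>\<in>diagram lam. admissible_at (T \<alpha>) (content \<alpha>))"
proof -
  have lower: "- int (sum_list lam) \<le> k"
    if "\<alpha> \<in> diagram lam" "T \<alpha> = Pr k" "admissible_at (T \<alpha>) (content \<alpha>)" for \<alpha> k
  proof -
    obtain i j where ij: "\<alpha> = (i, j)" by (cases \<alpha>)
    then have "1 \<le> i" "j \<le> sum_list lam" using that(1) col_le_size by (auto simp: diag_mem)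
    then show ?thesis using that ij by (auto simp: admissible_at_def content_def)
  qed
  have range: "(\<forall>\<alpha>\<in>diagram lam. \<forall>k. T \<alpha> = Unpr k \<longrightarrow> 1 \<le> k \<and> k \<le> n) \<and>
      (\<forall>\<alpha>\<in>diagram lam. \<forall>k. T \<alpha> = Pr k \<longrightarrow> k \<le> int n) \<longleftrightarrow> (\<forall>\<alpha>\<in>diagram lam. sym_in_range n lam (T \<alpha>))"
    if "\<forall>\<alpha>\<in>diagram lam. admissible_at (T \<alpha>) (content \<alpha>)"
    using that lower by (auto simp: sym_in_range_def split: sym.splits)
  have regroup: "\<And>A S RU RP Ro Co F Ad Ra. (A \<longleftrightarrow> S \<and> RU \<and> RP \<and> Ro \<and> Co \<and> F) \<Longrightarrow>
      (Co \<Longrightarrow> F \<longleftrightarrow> Ad) \<Longrightarrow> (Ad \<Longrightarrow> RU \<and> RP \<longleftrightarrow> Ra) \<Longrightarrow> (A \<longleftrightarrow> S \<and> Ra \<and> Ro \<and> Co \<and> Ad)"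
    by blast
  show ?thesis
    by (rule regroup[OF reverse_supertableau_iff flag_iff_admissible[OF part] range])
qed

definition encode_tableau :: "nat \<Rightarrow> nat list \<Rightarrow> (nat \<times> nat \<Rightarrow> sym) \<Rightarrow> nat \<times> nat \<Rightarrow> nat" where
  "encode_tableau n lam T = (\<lambda>\<alpha>. if \<alpha> \<in> diagram lam then sym_pos n (T \<alpha>) else 0)"

definition decode_filling :: "nat \<Rightarrow> nat list \<Rightarrow> (nat \<times> nat \<Rightarrow> nat) \<Rightarrow> nat \<times> nat \<Rightarrow> sym" where
  "decode_filling n lam F = (\<lambda>\<alpha>. if \<alpha> \<in> diagram lam then pos_sym n (F \<alpha>) else Unpr 0)"

lemma filling_encode_iff:
  assumes range: "\<forall>\<alpha>\<in>diagram lam. sym_in_range n lam (T \<alpha>)"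
  shows "filling (super_word n lam x a) lam (encode_tableau n lam T) \<longleftrightarrow>
     (\<forall>i j j'. (i, j) \<in> diagram lam \<longrightarrow> (i, j') \<in> diagram lam \<longrightarrow> j < j' \<longrightarrow> row_sym_ok (T (i, j)) (T (i, j'))) \<and>
     (\<forall>i i' j. (i, j) \<in> diagram lam \<longrightarrow> (i', j) \<in> diagram lam \<longrightarrow> i < i' \<longrightarrow> col_sym_ok (T (i, j)) (T (i', j)))"
  using range super_word_sym_pos(1)[of n lam _ x a] row_ok_sym_pos[of n lam _ _ x a] col_ok_sym_pos[of n lam _ _ x a]
  unfolding filling_def encode_tableau_def by auto

lemma decode_encode:
  assumes "\<forall>\<alpha>. \<alpha> \<notin> diagram lam \<longrightarrow> T \<alpha> = Unpr 0" "\<forall>\<alpha>\<in>diagram lam. sym_in_range n lam (T \<alpha>)"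
  shows "decode_filling n lam (encode_tableau n lam T) = T"
  using assms by (auto simp: decode_filling_def encode_tableau_def sym_pos_inverse fun_eq_iff)

lemma encode_decode:
  assumes "filling (super_word n lam x a) lam F"
  shows "encode_tableau n lam (decode_filling n lam F) = F"
    and "\<forall>\<alpha>\<in>diagram lam. sym_in_range n lam (decode_filling n lam F \<alpha>)"
  using assms pos_sym_inverse[of _ n lam x a] unfolding filling_def
  by (auto simp: decode_filling_def encode_tableau_def fun_eq_iff)

lemma filling_weight_encode:
  assumes "\<forall>\<alpha>\<in>diagram lam. sym_in_range n lam (T \<alpha>)"
  shows "filling_weight (super_word n lam x a) lam (encode_tableau n lam T) =
    (if \<forall>\<alpha>\<in>diagram lam. admissible_at (T \<alpha>) (content \<alpha>)
     then \<Prod>\<alpha>\<in>diagram lam. sym_weight x a (T \<alpha>) else 0)"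
proof -
  have "filling_weight (super_word n lam x a) lam (encode_tableau n lam T) =
      (\<Prod>\<alpha>\<in>diagram lam. if admissible_at (T \<alpha>) (content \<alpha>) then sym_weight x a (T \<alpha>) else 0)"
    unfolding filling_weight_def using assms by (intro prod.cong) (auto simp: encode_tableau_def weight_sym_pos)
  moreover have "(\<Prod>\<alpha>\<in>diagram lam. if admissible_at (T \<alpha>) (content \<alpha>) then sym_weight x a (T \<alpha>) else 0) = 0"
    if "\<not> (\<forall>\<alpha>\<in>diagram lam. admissible_at (T \<alpha>) (content \<alpha>))"
    using that finite_diagram by (intro prod_zero) auto
  moreover have "(\<Prod>\<alpha>\<in>diagram lam. if admissible_at (T \<alpha>) (content \<alpha>) then sym_weight x a (T \<alpha>) else 0)
      = (\<Prod>\<alpha>\<in>diagram lam. sym_weight x a (T \<alpha>))"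
    if "\<forall>\<alpha>\<in>diagram lam. admissible_at (T \<alpha>) (content \<alpha>)"
    using that by (intro prod.cong) auto
  ultimately show ?thesis by simp
qed

text \<open>The supertableau sum is the filling sum of the super word: non-admissible fillings
  weigh nothing, and encoding is a weight-preserving bijection on the rest.\<close>

theorem supertableau_sum_filling_sum:
  assumes part: "is_partition lam"
  shows "(\<Sum>T\<in>{T. reverse_supertableau n lam T}. \<Prod>\<alpha>\<in>diagram lam. sym_weight x a (T \<alpha>))
       = filling_sum (super_word n lam x a) lam"
proof -
  let ?Ls = "super_word n lam x a" and ?enc = "encode_tableau n lam" and ?dec = "decode_filling n lam"
  let ?adm = "\<lambda>T. \<forall>\<alpha>\<in>diagram lam. admissible_at (T \<alpha>) (content \<alpha>)"
  have "(\<Sum>T\<in>{T. reverse_supertableau n lam T}. \<Prod>\<alpha>\<in>diagram lam. sym_weight x a (T \<alpha>))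
      = (\<Sum>F\<in>{F. filling ?Ls lam F \<and> ?adm (?dec F)}. filling_weight ?Ls lam F)"
  proof (rule sum.reindex_bij_witness[where i = ?dec and j = ?enc])
    fix T assume "T \<in> {T. reverse_supertableau n lam T}"
    then have T: "reverse_supertableau n lam T" by simp
    note props = T[unfolded reverse_supertableau_iff_admissible[OF part]]
    show "?dec (?enc T) = T" using props by (intro decode_encode) auto
    show "?enc T \<in> {F. filling ?Ls lam F \<and> ?adm (?dec F)}"
      using props filling_encode_iff[of lam n T x a] \<open>?dec (?enc T) = T\<close> by auto
    show "filling_weight ?Ls lam (?enc T) = (\<Prod>\<alpha>\<in>diagram lam. sym_weight x a (T \<alpha>))"
      using props filling_weight_encode[of lam n T x a] by auto
  next
    fix F assume "F \<in> {F. filling ?Ls lam F \<and> ?adm (?dec F)}"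
    then have F: "filling ?Ls lam F" "?adm (?dec F)" by auto
    show "?enc (?dec F) = F" by (rule encode_decode(1)[OF F(1)])
    have "\<forall>\<alpha>. \<alpha> \<notin> diagram lam \<longrightarrow> ?dec F \<alpha> = Unpr 0" by (simp add: decode_filling_def)
    then show "?dec F \<in> {T. reverse_supertableau n lam T}"
      using F encode_decode[OF F(1)] filling_encode_iff[of lam n "?dec F" x a]
      unfolding reverse_supertableau_iff_admissible[OF part] by auto
  qed
  also have "\<dots> = filling_sum ?Ls lam"
    unfolding filling_sum_def
  proof (rule sum.mono_neutral_left[OF finite_fillings])
    show "\<forall>F\<in>{F. filling ?Ls lam F} - {F. filling ?Ls lam F \<and> ?adm (?dec F)}. filling_weight ?Ls lam F = 0"
    proof
      fix F assume "F \<in> {F. filling ?Ls lam F} - {F. filling ?Ls lam F \<and> ?adm (?dec F)}"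
      then have F: "filling ?Ls lam F" "\<not> ?adm (?dec F)" by auto
      then show "filling_weight ?Ls lam F = 0"
        using filling_weight_encode[of lam n "?dec F" x a] encode_decode[OF F(1)] by auto
    qed
  qed auto
  finally show ?thesis .
qed


lemma super_word_double_schur:
  fixes x :: "nat \<Rightarrow> 'r::comm_ring_1" and a :: "int \<Rightarrow> 'r"
  assumes part: "is_partition lam"
  shows "filling_sum (super_word n lam x a) lam = double_schur n lam x a"
proof -
  let ?ks = "prime_range n lam"
  have "filling_sum (super_word n lam x a) lam =
      filling_sum (map (x_letter x) (rev [n+1..<n+1]) @ map (y_letter a (int n + 1)) ?ks @
        map (corrected_letter x a ?ks) (rev [1..<n+1])) lam"
    unfolding super_word_def by (rule pass_unprimed_letters[OF part prime_range_sorted]) simp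
  also have "\<dots> = filling_sum (map (y_letter a (int n + 1)) ?ks @ map (corrected_letter x a ?ks) (rev [1..<n+1])) lam"
    by simp
  also have "\<dots> = filling_sum (map (corrected_letter x a ?ks) (rev [1..<n+1])) lam"
    using prime_range_set by (intro filling_sum_drop_prefix[OF part]) (auto simp: y_letter_def threshold_def)
  also have "\<dots> = double_schur n lam x a"
    by (rule double_schur_filling_sum[OF part, symmetric])
  finally show ?thesis .
qed

theorem double_schur_supertableau_expansion:
  fixes x :: "nat \<Rightarrow> 'r::comm_ring_1" and a :: "int \<Rightarrow> 'r"
  assumes "is_partition lam"
  shows "double_schur n lam x a =
    (\<Sum>T\<in>{T. reverse_supertableau n lam T}. \<Prod>\<alpha>\<in>diagram lam. sym_weight x a (T \<alpha>))"
  using supertableau_sum_filling_sum[OF assms, where n=n and x=x and a=a]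
    super_word_double_schur[OF assms, where n=n and x=x and a=a] by simp

text \<open>Corollary 4.2; the expansion holds for every partition.\<close>

theorem corollary4p2:
  fixes n :: nat and lam :: "nat list"
    and x :: "nat \<Rightarrow> 'r::comm_ring_1" and a :: "int \<Rightarrow> 'r"
  assumes "1 \<le> n" and "is_partition lam" and "length lam \<le> n"
  shows "double_schur n lam x a =
    (\<Sum>T\<in>{T. reverse_supertableau n lam T}. \<Prod>\<alpha>\<in>diagram lam. sym_weight x a (T \<alpha>))"
  by (rule double_schur_supertableau_expansion[OF assms(2)])

end
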